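(* Let $m,n\ge2$ and let $\Gamma=\langle s\rangle*\langle t\rangle\subseteq\mathrm{PGL}_2(K)$ be a discrete subgroup isomorphic to $C_m*C_n$, with $s$ of order $m$ and $t$ of order $n$, normalised (by conjugation) so that the fixed points of $s$ are $0,\infty$ and the fixed points of $t$ are $1,\lambda$ with $|\lambda|=1$. Then $$|\lambda-1|<\alpha_p(m,n).$$ Conversely, for every $\lambda\in K$ with $|\lambda|=1$, $\lambda\neq1$ and $|\lambda-1|<\alpha_p(m,n)$, there exist $s,t\in\mathrm{PGL}_2(K)$ of orders $m,n$ with fixed points $\{0,\infty\}$ and $\{1,\lambda\}$ respectively such that $\langle s,t\rangle$ is a discrete subgroup of $\mathrm{PGL}_2(K)$ isomorphic to $C_m*C_n$ (via $s,t$).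
   Context: $K$ is a finite extension of $\mathbb{Q}_p$ containing the needed roots of unity, with absolute value $|\cdot|$. For an integer $k$, $\epsilon_k=1$ if $p\mid k$ and $\epsilon_k=0$ otherwise, and $\alpha_p(m,n):=|1-\zeta_p|^{\epsilon_m+\epsilon_n}$ where $\zeta_p$ is a primitive $p$-th root of unity. *)

theory Defs
  imports Complex_Main "HOL-Computational_Algebra.Primes"
begin

text \<open>K is modelled as a field of characteristic 0 with a non-archimedean
absolute value absv such that absv p < 1 (residue characteristic p) and whose
closed unit ball is sequentially compact (hence K is complete and locally
compact).  A nondiscrete locally compact field of characteristic 0 with
absv p < 1 is exactly a finite extension of Q_p (with an absolute value
equivalent to the extension of the p-adic one).\<close>

definition padic_local_field :: "nat \<Rightarrow> ('k::field_char_0 \<Rightarrow> real) \<Rightarrow> bool" where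
  "padic_local_field p absv \<longleftrightarrow>
     prime p \<and>
     (\<forall>x. 0 \<le> absv x) \<and>
     (\<forall>x. absv x = 0 \<longleftrightarrow> x = 0) \<and>
     (\<forall>x y. absv (x * y) = absv x * absv y) \<and>
     (\<forall>x y. absv (x + y) \<le> max (absv x) (absv y)) \<and>
     absv (of_nat p) < 1 \<and>
     (\<forall>X::nat \<Rightarrow> 'k. (\<forall>i. absv (X i) \<le> 1) \<longrightarrow>
        (\<exists>(r::nat \<Rightarrow> nat) (L::'k). strict_mono r \<and>
           (\<forall>e::real>0. \<exists>N::nat. \<forall>i\<ge>N. absv (X (r i) - L) < e)))"

definition primitive_root_of_unity :: "nat \<Rightarrow> 'k::field \<Rightarrow> bool" where
  "primitive_root_of_unity k z \<longleftrightarrow> z ^ k = 1 \<and> (\<forall>j. 0 < j \<and> j < k \<longrightarrow> z ^ j \<noteq> 1)"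

definition eps :: "nat \<Rightarrow> nat \<Rightarrow> nat" where
  "eps p k = (if p dvd k then 1 else 0)"

text \<open>alpha_p(m,n) = |1 - zeta_p|^(eps_m + eps_n).  If the exponent is 0 the
value is 1 regardless of the choice of zeta_p.\<close>
definition alpha :: "('k::field \<Rightarrow> real) \<Rightarrow> nat \<Rightarrow> nat \<Rightarrow> nat \<Rightarrow> real" where
  "alpha absv p m n =
     absv (1 - (SOME z. primitive_root_of_unity p z)) ^ (eps p m + eps p n)"

text \<open>A matrix (a,b,c,d) stands for [[a,b],[c,d]].  An element of PGL_2(K) is
represented by an invertible matrix; two matrices represent the same element
iff they are proportional.\<close>

type_synonym 'k m2 = "'k \<times> 'k \<times> 'k \<times> 'k"

fun m2_mult :: "'k::comm_ring_1 m2 \<Rightarrow> 'k m2 \<Rightarrow> 'k m2" where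
  "m2_mult (a, b, c, d) (e, f, g, h) =
     (a * e + b * g, a * f + b * h, c * e + d * g, c * f + d * h)"

definition m2_id :: "'k::comm_ring_1 m2" where
  "m2_id = (1, 0, 0, 1)"

fun m2_det :: "'k::comm_ring_1 m2 \<Rightarrow> 'k" where
  "m2_det (a, b, c, d) = a * d - b * c"

fun m2_adj :: "'k::comm_ring_1 m2 \<Rightarrow> 'k m2" where
  "m2_adj (a, b, c, d) = (d, - b, - c, a)"

fun m2_smult :: "'k::comm_ring_1 \<Rightarrow> 'k m2 \<Rightarrow> 'k m2" where
  "m2_smult x (a, b, c, d) = (x * a, x * b, x * c, x * d)"

definition m2_pow :: "'k::comm_ring_1 m2 \<Rightarrow> nat \<Rightarrow> 'k m2" where
  "m2_pow M k = (m2_mult M ^^ k) m2_id"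

definition proj_eq :: "'k::field m2 \<Rightarrow> 'k m2 \<Rightarrow> bool" where
  "proj_eq M N \<longleftrightarrow> (\<exists>x. x \<noteq> 0 \<and> M = m2_smult x N)"

definition pgl_has_order :: "'k::field m2 \<Rightarrow> nat \<Rightarrow> bool" where
  "pgl_has_order M k \<longleftrightarrow> 0 < k \<and> proj_eq (m2_pow M k) m2_id \<and>
     (\<forall>j. 0 < j \<and> j < k \<longrightarrow> \<not> proj_eq (m2_pow M j) m2_id)"

definition m2_prod :: "'k::comm_ring_1 m2 list \<Rightarrow> 'k m2" where
  "m2_prod ws = foldr m2_mult ws m2_id"

text \<open>The subgroup of PGL_2 generated by s and t (as a set of matrix
representatives): all finite products of s, t and their inverses
(the adjugate represents the inverse in PGL_2).\<close>
definition gen_group :: "'k::comm_ring_1 m2 \<Rightarrow> 'k m2 \<Rightarrow> 'k m2 set" where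
  "gen_group s t = {m2_prod ws | ws. set ws \<subseteq> {s, t, m2_adj s, m2_adj t}}"

text \<open>Discreteness: the identity is isolated in the subgroup for the topology
of PGL_2(K), i.e. (the quotient map GL_2 \<rightarrow> PGL_2 being open) there is
an e > 0 such that every element having a representative e-close to the
identity matrix is the identity.\<close>
definition pgl_discrete :: "('k::field \<Rightarrow> real) \<Rightarrow> 'k m2 set \<Rightarrow> bool" where
  "pgl_discrete absv G \<longleftrightarrow>
     (\<exists>e>0. \<forall>g\<in>G. \<forall>a b c d.
        proj_eq (a, b, c, d) g \<and> absv (a - 1) < e \<and> absv b < e \<and>
        absv c < e \<and> absv (d - 1) < e \<longrightarrow> proj_eq g m2_id)"

text \<open>Free product: the homomorphism C_m * C_n \<rightarrow> PGL_2 sending the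
generators to s and t is injective, i.e. no nonempty reduced word
s^a1 t^b1 ... (alternating, 0 < a_i < m, 0 < b_i < n) is trivial.
A word is a list of (is_s, exponent).\<close>
definition reduced_word :: "nat \<Rightarrow> nat \<Rightarrow> (bool \<times> nat) list \<Rightarrow> bool" where
  "reduced_word m n w \<longleftrightarrow>
     (\<forall>i<length w. 0 < snd (w ! i) \<and>
        snd (w ! i) < (if fst (w ! i) then m else n)) \<and>
     (\<forall>i. Suc i < length w \<longrightarrow> fst (w ! i) \<noteq> fst (w ! Suc i))"

definition eval_word :: "'k::comm_ring_1 m2 \<Rightarrow> 'k m2 \<Rightarrow> (bool \<times> nat) list \<Rightarrow> 'k m2" where
  "eval_word s t w = m2_prod (map (\<lambda>(b, k). m2_pow (if b then s else t) k) w)"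

definition free_product_via :: "nat \<Rightarrow> nat \<Rightarrow> 'k::field m2 \<Rightarrow> 'k m2 \<Rightarrow> bool" where
  "free_product_via m n s t \<longleftrightarrow>
     pgl_has_order s m \<and> pgl_has_order t n \<and>
     (\<forall>w. w \<noteq> [] \<and> reduced_word m n w \<longrightarrow> \<not> proj_eq (eval_word s t w) m2_id)"

text \<open>P^1(K) = K \<union> {\<infinity>}, with None = \<infinity>.\<close>
fun mobius :: "'k::field m2 \<Rightarrow> 'k option \<Rightarrow> 'k option" where
  "mobius (a, b, c, d) None = (if c = 0 then None else Some (a / c))"
| "mobius (a, b, c, d) (Some x) =
     (if c * x + d = 0 then None else Some ((a * x + b) / (c * x + d)))"

definition fixed_points :: "'k::field m2 \<Rightarrow> 'k option set" where
  "fixed_points M = {z. mobius M z = z}"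

end

theory Submission
  imports Defs "HOL-Computational_Algebra.Polynomial"
begin

(* After conjugation, s is represented by Sm z = diag(z,1) with z a primitive m-th root
   of unity and t by Tm lam f, the matrix with fixed points 1, lam and multiplier f, a
   primitive n-th root of unity.  The number alpha_p(m,n) factors as af m * af n, where
   af m = |1 - zeta_p|^eps_p(m) is the minimum of |1 - z^k| over 0 < k < m (attained).

   Sufficiency is a ping-pong argument on K^2: with delta = |lam - 1| < af m * af n the
   two cones {|x - y| <= rho |y|} and {|x - y| > rho |y|} (rho = delta / af n) are
   exchanged by nontrivial powers of s and t, and a careful look at the images of
   (1,1) and (0,1) shows that no nonempty reduced word is delta-close to the identity.
   This gives freeness and discreteness simultaneously.

   Necessity: if delta >= af m * af n, take the powers s^a, t^b attaining af m and af n;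
   their product is conjugate to a matrix with integral entries and unit determinant.  Compactness of the unit ball yields a power of it arbitrarily close to
   the identity; conjugating back (which loses at most the factor 1 / |r| for a fixed r)
   produces nontrivial elements (s^a t^b)^k near the identity, contradicting discreteness
   together with freeness. *)

lemma m2_mult_assoc: "m2_mult (m2_mult A B) C = m2_mult A (m2_mult B C)"
  by (cases A rule: prod_cases4; cases B rule: prod_cases4; cases C rule: prod_cases4)
     (simp add: algebra_simps)

lemma m2_mult_id_left [simp]: "m2_mult m2_id A = A"
  by (cases A rule: prod_cases4) (simp add: m2_id_def)

lemma m2_mult_id_right [simp]: "m2_mult A m2_id = A"
  by (cases A rule: prod_cases4) (simp add: m2_id_def)

lemma m2_pow_0 [simp]: "m2_pow M 0 = m2_id"
  by (simp add: m2_pow_def)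

lemma m2_pow_Suc: "m2_pow M (Suc k) = m2_mult M (m2_pow M k)"
  by (simp add: m2_pow_def)

lemma m2_pow_1 [simp]: "m2_pow M (Suc 0) = M"
  by (simp add: m2_pow_def)

lemma m2_pow_add: "m2_pow M (a + b) = m2_mult (m2_pow M a) (m2_pow M b)"
  by (induction a) (auto simp: m2_pow_Suc m2_mult_assoc)

lemma m2_prod_Nil [simp]: "m2_prod [] = m2_id"
  by (simp add: m2_prod_def)

lemma m2_prod_Cons [simp]: "m2_prod (x # xs) = m2_mult x (m2_prod xs)"
  by (simp add: m2_prod_def)

lemma m2_prod_append: "m2_prod (xs @ ys) = m2_mult (m2_prod xs) (m2_prod ys)"
  by (induction xs) (auto simp: m2_mult_assoc)

lemma m2_prod_replicate: "m2_prod (replicate k M) = m2_pow M k"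
  by (induction k) (auto simp: m2_pow_Suc)

lemma m2_prod_concat: "m2_prod (concat xss) = m2_prod (map m2_prod xss)"
  by (induction xss) (auto simp: m2_prod_append)

lemma m2_det_mult: "m2_det (m2_mult A B) = m2_det A * m2_det B"
  by (cases A rule: prod_cases4; cases B rule: prod_cases4) (simp add: algebra_simps)

lemma m2_det_pow: "m2_det (m2_pow A k) = m2_det A ^ k"
  by (induction k) (auto simp: m2_pow_Suc m2_det_mult m2_id_def)

lemma m2_adj_mult: "m2_mult (m2_adj A) A = m2_smult (m2_det A) m2_id"
  by (cases A rule: prod_cases4) (simp add: m2_id_def algebra_simps)

lemma m2_smult_mult_left: "m2_mult (m2_smult x A) B = m2_smult x (m2_mult A B)"
  by (cases A rule: prod_cases4; cases B rule: prod_cases4) (simp add: algebra_simps)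

lemma m2_smult_mult_right: "m2_mult A (m2_smult x B) = m2_smult x (m2_mult A B)"
  by (cases A rule: prod_cases4; cases B rule: prod_cases4) (simp add: algebra_simps)

lemma m2_smult_smult: "m2_smult x (m2_smult y A) = m2_smult (x * y) A"
  by (cases A rule: prod_cases4) (simp add: algebra_simps)

lemma m2_smult_1 [simp]: "m2_smult 1 A = A"
  by (cases A rule: prod_cases4) simp

lemma conj_pow:
  fixes h C :: "'k::field m2"
  assumes hh: "m2_mult (m2_adj h) h = m2_smult r m2_id" and j: "0 < j"
  shows "m2_pow (m2_mult h (m2_mult C (m2_adj h))) j
           = m2_smult (r ^ (j - 1)) (m2_mult h (m2_mult (m2_pow C j) (m2_adj h)))"
  using j
proof (induction j)
  case (Suc j)
  show ?case
  proof (cases j)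
    case (Suc j')
    have "m2_pow (m2_mult h (m2_mult C (m2_adj h))) (Suc j) =
          m2_mult (m2_mult h (m2_mult C (m2_adj h)))
            (m2_smult (r ^ (j - 1)) (m2_mult h (m2_mult (m2_pow C j) (m2_adj h))))"
      using Suc.IH Suc by (simp add: m2_pow_Suc)
    also have "\<dots> = m2_smult (r ^ (j - 1)) (m2_mult h (m2_mult C
                      (m2_mult (m2_mult (m2_adj h) h) (m2_mult (m2_pow C j) (m2_adj h)))))"
      by (simp add: m2_smult_mult_right m2_mult_assoc)
    also have "\<dots> = m2_smult (r ^ (j - 1) * r) (m2_mult h (m2_mult (m2_pow C (Suc j)) (m2_adj h)))"
      unfolding hh
      by (simp add: m2_smult_mult_left m2_smult_mult_right m2_smult_smult m2_pow_Suc m2_mult_assoc)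
    finally show ?thesis using Suc by (simp add: mult.commute)
  qed simp
qed simp

lemma proj_eq_refl [simp]: "proj_eq (M::'k::field m2) M"
  unfolding proj_eq_def by (rule exI[of _ 1]) simp

lemma proj_eq_sym: "proj_eq (M::'k::field m2) N \<Longrightarrow> proj_eq N M"
  unfolding proj_eq_def
proof (elim exE conjE)
  fix x assume "x \<noteq> 0" "M = m2_smult x N"
  then show "\<exists>y. y \<noteq> 0 \<and> N = m2_smult y M"
    by (intro exI[of _ "inverse x"]) (simp add: m2_smult_smult)
qed

lemma proj_eq_trans [trans]: "proj_eq (M::'k::field m2) N \<Longrightarrow> proj_eq N P \<Longrightarrow> proj_eq M P"
  unfolding proj_eq_def
proof (elim exE conjE)
  fix x y assume "x \<noteq> 0" "M = m2_smult x N" "y \<noteq> 0" "N = m2_smult y P"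
  then show "\<exists>z. z \<noteq> 0 \<and> M = m2_smult z P"
    by (intro exI[of _ "x * y"]) (simp add: m2_smult_smult)
qed

lemma proj_eq_smult: "x \<noteq> 0 \<Longrightarrow> proj_eq (m2_smult x M) (M::'k::field m2)"
  unfolding proj_eq_def by auto

lemma proj_eq_smult_left_iff: "(c::'k::field) \<noteq> 0 \<Longrightarrow> proj_eq (m2_smult c M) N \<longleftrightarrow> proj_eq M N"
  using proj_eq_smult proj_eq_sym proj_eq_trans by metis

lemma proj_eq_of_smult_eq:
  fixes X Y :: "'k::field m2"
  assumes "a \<noteq> 0" "b \<noteq> 0" "m2_smult a X = m2_smult b Y"
  shows "proj_eq X Y"
proof -
  have "X = m2_smult (inverse a) (m2_smult a X)" using assms(1) by (simp add: m2_smult_smult)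
  also have "\<dots> = m2_smult (inverse a * b) Y" using assms(3) by (simp add: m2_smult_smult)
  finally show ?thesis unfolding proj_eq_def using assms by (intro exI[of _ "inverse a * b"]) simp
qed

lemma proj_eq_mult:
  "proj_eq (M::'k::field m2) M' \<Longrightarrow> proj_eq N N' \<Longrightarrow> proj_eq (m2_mult M N) (m2_mult M' N')"
  unfolding proj_eq_def
proof (elim exE conjE)
  fix x y assume "x \<noteq> 0" "M = m2_smult x M'" "y \<noteq> 0" "N = m2_smult y N'"
  then show "\<exists>z. z \<noteq> 0 \<and> m2_mult M N = m2_smult z (m2_mult M' N')"
    by (intro exI[of _ "x * y"])
       (simp add: m2_smult_smult m2_smult_mult_left m2_smult_mult_right mult.commute)
qed

lemma proj_eq_pow: "proj_eq (M::'k::field m2) M' \<Longrightarrow> proj_eq (m2_pow M k) (m2_pow M' k)"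
  by (induction k) (auto simp: m2_pow_Suc intro: proj_eq_mult)

lemma proj_eq_id_iff: "proj_eq (M::'k::field m2) m2_id \<longleftrightarrow> (\<exists>x. x \<noteq> 0 \<and> M = (x, 0, 0, x))"
  by (simp add: proj_eq_def m2_id_def)

lemma order_proj_eq: "proj_eq (M::'k::field m2) M' \<Longrightarrow> pgl_has_order M k \<longleftrightarrow> pgl_has_order M' k"
  unfolding pgl_has_order_def by (meson proj_eq_pow proj_eq_sym proj_eq_trans)

section \<open>Non-archimedean absolute values\<close>

locale padic =
  fixes p :: nat and absv :: "'k::field_char_0 \<Rightarrow> real"
  assumes K: "padic_local_field p absv"
begin

lemma prime_p: "prime p" using K unfolding padic_local_field_def by blast
lemma av_nonneg [simp]: "0 \<le> absv x" using K unfolding padic_local_field_def by blast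
lemma av_zero_iff [simp]: "absv x = 0 \<longleftrightarrow> x = 0" using K unfolding padic_local_field_def by blast
lemma av_mult: "absv (x * y) = absv x * absv y" using K unfolding padic_local_field_def by blast
lemma av_ultra: "absv (x + y) \<le> max (absv x) (absv y)" using K unfolding padic_local_field_def by blast
lemma av_p: "absv (of_nat p) < 1" using K unfolding padic_local_field_def by blast

lemma av_compact:
  "(\<forall>i. absv (X i) \<le> 1) \<Longrightarrow>
     \<exists>(r::nat \<Rightarrow> nat) L. strict_mono r \<and> (\<forall>e::real>0. \<exists>N. \<forall>i\<ge>N. absv (X (r i) - L) < e)"
  using K unfolding padic_local_field_def by blast

lemma av_0 [simp]: "absv 0 = 0"
  by simp

lemma av_pos: "x \<noteq> 0 \<Longrightarrow> 0 < absv x"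
  using av_nonneg[of x] av_zero_iff[of x] by linarith

lemma av_1 [simp]: "absv 1 = 1"
proof -
  have "absv 1 = absv 1 * absv 1" using av_mult[of 1 1] by simp
  moreover have "absv 1 \<noteq> 0" by simp
  ultimately show ?thesis by (metis mult_cancel_right1)
qed

lemma av_minus [simp]: "absv (- x) = absv x"
proof -
  have "absv (-1) * absv (-1) = absv ((-1) * (-1::'k))" by (rule av_mult[symmetric])
  then have "absv (-1::'k) ^ 2 = 1" by (simp add: power2_eq_square)
  then have "absv (-1::'k) = 1 \<or> absv (-1::'k) = -1" using power2_eq_1_iff by blast
  then have "absv (-1::'k) = 1" using av_nonneg[of "-1"] by linarith
  then show ?thesis using av_mult[of "-1" x] by simp
qed

lemma av_diff_sym: "absv (x - y) = absv (y - x)"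
  by (metis av_minus minus_diff_eq)

lemma av_diff_ultra: "absv (x - y) \<le> max (absv x) (absv y)"
  using av_ultra[of x "- y"] by simp

lemma av_add_le: "absv x \<le> c \<Longrightarrow> absv y \<le> c \<Longrightarrow> absv (x + y) \<le> c"
  using av_ultra[of x y] by linarith

lemma av_add_less: "absv x < c \<Longrightarrow> absv y < c \<Longrightarrow> absv (x + y) < c"
  using av_ultra[of x y] by linarith

lemma av_diff_le: "absv x \<le> c \<Longrightarrow> absv y \<le> c \<Longrightarrow> absv (x - y) \<le> c"
  using av_diff_ultra[of x y] by linarith

lemma av_diff_less: "absv x < c \<Longrightarrow> absv y < c \<Longrightarrow> absv (x - y) < c"
  using av_diff_ultra[of x y] by linarith

lemma av_strict: "absv a < absv b \<Longrightarrow> absv (a + b) = absv b"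
proof -
  assume h: "absv a < absv b"
  have "absv (a + b) \<le> absv b" using av_ultra[of a b] h by linarith
  moreover have "absv b \<le> max (absv (a + b)) (absv a)" using av_diff_ultra[of "a + b" a] by simp
  ultimately show ?thesis using h by linarith
qed

lemma av_unit_close: "absv (d - 1) < 1 \<Longrightarrow> absv d = 1"
proof -
  assume "absv (d - 1) < 1"
  then have "absv ((d - 1) + 1) = absv (1::'k)" by (intro av_strict) simp
  then show ?thesis by simp
qed

lemma av_power: "absv (x ^ k) = absv x ^ k"
  by (induction k) (auto simp: av_mult)

lemma av_inverse: "absv (inverse x) = inverse (absv x)"
proof (cases "x = 0")
  case False
  have "absv x * absv (inverse x) = 1" using False by (simp flip: av_mult)
  then show ?thesis using False by (metis av_pos inverse_unique less_irrefl)
qed simp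

lemma av_divide: "absv (x / y) = absv x / absv y"
  by (simp add: divide_inverse av_mult av_inverse)

lemma av_small_mult: "absv x \<le> 1 \<Longrightarrow> absv E < e \<Longrightarrow> absv (x * E) < e"
  by (simp add: av_mult) (meson av_nonneg le_less_trans mult_left_le_one_le)

lemma av_of_nat_le: "absv (of_nat n) \<le> 1"
proof (induction n)
  case (Suc n)
  have "absv (1 + of_nat n) \<le> 1" by (rule av_add_le) (use Suc in auto)
  then show ?case by simp
qed simp

lemma av_of_int_le: "absv (of_int n) \<le> 1"
proof (cases "n \<ge> 0")
  case True
  then have "(of_int n::'k) = of_nat (nat n)" by simp
  then show ?thesis using av_of_nat_le[of "nat n"] by simp
next
  case False
  then have "(of_int n::'k) = - of_nat (nat (- n))" by simp
  then show ?thesis using av_of_nat_le[of "nat (- n)"] by simp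
qed

lemma av_sum_le: "(\<And>i. i \<in> A \<Longrightarrow> absv (f i) \<le> c) \<Longrightarrow> 0 \<le> c \<Longrightarrow> absv (sum f A) \<le> c"
  by (induction A rule: infinite_finite_induct) (auto simp: av_add_le)

text \<open>Integers prime to p are units: write 1 = u e + v p and use |p| < 1.\<close>
lemma av_of_nat_coprime:
  assumes "\<not> p dvd e" shows "absv (of_nat e) = 1"
proof -
  have "coprime p e" using assms prime_p by (simp add: prime_imp_coprime)
  then have "coprime (int e) (int p)" by (simp add: coprime_commute)
  then obtain u v where uv: "u * int e + v * int p = 1"
    using bezout_int[of "int e" "int p"] by auto
  have "(of_int (u * int e + v * int p) :: 'k) = 1" using uv by simp
  then have "(1::'k) = of_int u * of_nat e + of_int v * of_nat p" by simp
  then have "absv (1::'k) \<le> max (absv (of_int u * of_nat e)) (absv (of_int v * (of_nat p::'k)))"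
    using av_ultra by metis
  moreover have "absv (of_int u * (of_nat e::'k)) \<le> absv (of_nat e::'k)"
    using av_of_int_le[of u] by (simp add: av_mult mult_left_le_one_le)
  moreover have "absv (of_int v * (of_nat p::'k)) < 1"
    using av_small_mult[OF av_of_int_le av_p] .
  ultimately have "absv (of_nat e::'k) \<ge> 1" by simp
  then show ?thesis using av_of_nat_le[of e] by linarith
qed

lemma av_root_unity: "z ^ k = 1 \<Longrightarrow> 0 < k \<Longrightarrow> absv z = 1"
proof -
  assume "z ^ k = 1" "0 < k"
  then have "absv z ^ k = 1 ^ k" by (metis av_1 av_power power_one)
  then show ?thesis using \<open>0 < k\<close> av_nonneg power_eq_iff_eq_base[of k "absv z" 1] by simp
qed

lemma av_one_minus_le: "absv z = 1 \<Longrightarrow> absv (1 - z) \<le> 1"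
  by (rule av_diff_le) auto

text \<open>For a unit z, |1 - z^N| <= |1 - z| since 1 - z^N = (1 - z)(1 + z + ... + z^(N-1)).\<close>
lemma one_minus_pow_le:
  assumes "absv z = 1" shows "absv (1 - z ^ N) \<le> absv (1 - z)"
proof -
  have "absv (\<Sum>i<N. z ^ i) \<le> 1" by (rule av_sum_le) (auto simp: av_power assms)
  then show ?thesis by (simp add: one_diff_power_eq[of z N] av_mult mult_left_le)
qed

end

section \<open>Roots of unity\<close>

lemma pow_gcd_one:
  fixes x :: "'k::field"
  assumes "x ^ a = 1" "x ^ b = 1" shows "x ^ gcd a b = 1"
proof (cases "a = 0")
  case True then show ?thesis using assms by simp
next
  case False
  then obtain u v where uv: "a * u = b * v + gcd a b" using bezout_nat by blast
  have "1 = x ^ (a * u)" using assms by (simp add: power_mult)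
  also have "\<dots> = x ^ (b * v) * x ^ gcd a b" by (simp add: uv power_add)
  also have "\<dots> = x ^ gcd a b" using assms by (simp add: power_mult)
  finally show ?thesis by simp
qed

lemma prime_root_prim:
  fixes w :: "'k::field"
  assumes "prime q" "w ^ q = 1" "w \<noteq> 1"
  shows "primitive_root_of_unity q w"
  unfolding primitive_root_of_unity_def
proof (intro conjI allI impI)
  fix j assume j: "0 < j \<and> j < q"
  show "w ^ j \<noteq> 1"
  proof
    assume "w ^ j = 1"
    then have "w ^ gcd j q = 1" using pow_gcd_one assms by blast
    moreover have "gcd j q = 1"
      using j assms(1) by (metis gcd.commute nat_dvd_not_less prime_imp_coprime coprime_iff_gcd_eq_1)
    ultimately show False using assms by simp
  qed
qed (use assms in auto)

lemma prim_pow_prim: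
  fixes z :: "'k::field"
  assumes "primitive_root_of_unity m z" "q dvd m" "0 < q" "0 < m"
  shows "primitive_root_of_unity q (z ^ (m div q))"
  unfolding primitive_root_of_unity_def
proof (intro conjI allI impI)
  have "(z ^ (m div q)) ^ q = z ^ m" using assms(2) by (simp add: power_mult[symmetric])
  then show "(z ^ (m div q)) ^ q = 1" using assms(1) unfolding primitive_root_of_unity_def by simp
next
  fix j assume j: "0 < j \<and> j < q"
  obtain c where c: "m = q * c" using assms(2) by blast
  have cpos: "0 < c" using assms(4) c by (cases c) auto
  have "m div q = c" using c assms(3) by simp
  moreover have "0 < c * j \<and> c * j < m" using j cpos c by simp
  ultimately show "(z ^ (m div q)) ^ j \<noteq> 1"
    using assms(1) unfolding primitive_root_of_unity_def by (simp add: power_mult[symmetric])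
qed

lemma prim_root_nonzero: "primitive_root_of_unity q (z::'k::field) \<Longrightarrow> 0 < q \<Longrightarrow> z \<noteq> 0"
  unfolding primitive_root_of_unity_def by (metis power_0_left zero_neq_one not_gr0)

lemma prim_root_ne_1: "primitive_root_of_unity q (z::'k::field) \<Longrightarrow> 2 \<le> q \<Longrightarrow> z \<noteq> 1"
  unfolding primitive_root_of_unity_def by (metis One_nat_def Suc_1 Suc_le_lessD power_one_right zero_less_one)

lemma prim_root_powers_inj:
  fixes z :: "'k::field"
  assumes z: "primitive_root_of_unity q z" and q: "0 < q"
  shows "inj_on (\<lambda>j. z ^ j) {..<q}"
proof (rule inj_onI)
  have "\<not> (i < j \<and> z ^ i = z ^ j)" if "j < q" for i j
  proof
    assume ij: "i < j \<and> z ^ i = z ^ j"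
    have "i + (j - i) = j" using ij by simp
    then have "z ^ i * z ^ (j - i) = z ^ j" by (metis power_add)
    then have "z ^ i * z ^ (j - i) = z ^ i * 1" using ij by simp
    then have "z ^ (j - i) = 1" using prim_root_nonzero[OF z q] by simp
    then show False using z ij that unfolding primitive_root_of_unity_def by auto
  qed
  then show "i = j" if "i \<in> {..<q}" "j \<in> {..<q}" "z ^ i = z ^ j" for i j
    using that by (metis lessThan_iff linorder_neqE_nat)
qed

text \<open>A primitive q-th root generates all q-th roots of unity, since there are at most q.\<close>
lemma roots_are_powers:
  fixes z1 z2 :: "'k::field"
  assumes z1: "primitive_root_of_unity q z1" and z2: "z2 ^ q = 1" and q: "0 < q"
  shows "\<exists>j<q. z2 = z1 ^ j"
proof -
  define P :: "'k poly" where "P = monom 1 q - 1"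
  have R: "{x. poly P x = 0} = {x. x ^ q = 1}" by (auto simp: P_def poly_monom)
  have Pne: "P \<noteq> 0"
    using R q by (metis (mono_tags) mem_Collect_eq poly_0 power_0_left zero_neq_one not_gr0)
  have degP: "degree P \<le> q"
    unfolding P_def using degree_diff_le_max[of "monom (1::'k) q" 1] degree_monom_le[of "1::'k" q] by simp
  have finR: "finite {x::'k. x ^ q = 1}" using poly_roots_finite[OF Pne] R by simp
  have cardR: "card {x::'k. x ^ q = 1} \<le> q" using card_poly_roots_bound[OF Pne] degP R by simp
  have sub: "(\<lambda>j. z1 ^ j) ` {..<q} \<subseteq> {x. x ^ q = 1}"
    using z1 unfolding primitive_root_of_unity_def by (auto simp: power_mult[symmetric] mult.commute[of _ q] power_mult[of z1 q])
  have "card ((\<lambda>j. z1 ^ j) ` {..<q}) = q" using card_image[OF prim_root_powers_inj[OF z1 q]] by simp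
  then have "(\<lambda>j. z1 ^ j) ` {..<q} = {x. x ^ q = 1}"
    using card_subset_eq[OF finR sub] cardR card_mono[OF finR sub] by simp
  then show ?thesis using z2 by auto
qed

context padic
begin

text \<open>A nontrivial root of unity of order prime to p is at distance 1 from 1:
otherwise e = -sum (u^i - 1) would have absolute value < 1.\<close>
lemma coprime_root_far:
  assumes "\<not> p dvd e" "0 < e" "u ^ e = 1" "u \<noteq> 1"
  shows "absv (1 - u) \<ge> 1"
proof (rule ccontr)
  assume "\<not> absv (1 - u) \<ge> 1"
  then have lt: "absv (1 - u) < 1" by simp
  have u1: "absv u = 1" using av_root_unity assms by blast
  have "(1 - u) * (\<Sum>i<e. u^i) = 0" using one_diff_power_eq[of u e] assms by simp
  then have S: "(\<Sum>i<e. u^i) = 0" using assms(4) by simp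
  have "(\<Sum>i<e. u^i) = (\<Sum>i<e. u^i - 1) + of_nat e" by (simp add: sum_subtractf)
  then have "of_nat e = - (\<Sum>i<e. u^i - 1)" using S by (simp add: eq_neg_iff_add_eq_0 add.commute)
  then have "absv (of_nat e) = absv (\<Sum>i<e. u^i - 1)" by simp
  also have "\<dots> \<le> absv (1 - u)"
  proof (rule av_sum_le)
    fix i show "absv (u ^ i - 1) \<le> absv (1 - u)"
      using one_minus_pow_le[OF u1, of i] by (simp add: av_diff_sym)
  qed simp
  finally show False using av_of_nat_coprime[OF assms(1)] lt by simp
qed

text \<open>By induction
on d, passing from w to w^p (which only decreases |1 - w|).\<close>
lemma root_dist_lower:
  "\<omega> ^ d = 1 \<Longrightarrow> 0 < d \<Longrightarrow> \<omega> \<noteq> 1 \<Longrightarrow>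
     absv (1 - \<omega>) \<ge> 1 \<or> (p dvd d \<and> (\<exists>z. primitive_root_of_unity p z \<and> absv (1 - z) \<le> absv (1 - \<omega>)))"
proof (induction d arbitrary: \<omega> rule: less_induct)
  case (less d)
  show ?case
  proof (cases "p dvd d")
    case False
    then show ?thesis using coprime_root_far less.prems by blast
  next
    case True
    then obtain d' where d': "d = p * d'" by blast
    have p2: "p \<ge> 2" using prime_p by (simp add: prime_ge_2_nat)
    have d'pos: "0 < d'" using less.prems d' by (cases d') auto
    have lt: "d' < d" using d' p2 d'pos by simp
    have u1: "absv \<omega> = 1" using av_root_unity less.prems by blast
    show ?thesis
    proof (cases "\<omega> ^ p = 1")
      case True
      then have "primitive_root_of_unity p \<omega>" using prime_root_prim prime_p less.prems by blast
      then show ?thesis using \<open>p dvd d\<close> by blast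
    next
      case False
      have "(\<omega> ^ p) ^ d' = 1" using less.prems d' by (simp add: power_mult[symmetric])
      from less.IH[OF lt this d'pos False]
      have ih: "absv (1 - \<omega> ^ p) \<ge> 1 \<or> (\<exists>z. primitive_root_of_unity p z \<and> absv (1 - z) \<le> absv (1 - \<omega> ^ p))"
        by blast
      have le: "absv (1 - \<omega> ^ p) \<le> absv (1 - \<omega>)" by (rule one_minus_pow_le[OF u1])
      from ih show ?thesis
      proof
        assume "absv (1 - \<omega> ^ p) \<ge> 1" then show ?thesis using le by linarith
      next
        assume "\<exists>z. primitive_root_of_unity p z \<and> absv (1 - z) \<le> absv (1 - \<omega> ^ p)"
        then show ?thesis using le \<open>p dvd d\<close> by force
      qed
    qed
  qed
qed

lemma prim_dist_le:
  assumes z1: "primitive_root_of_unity p z1" and z2: "primitive_root_of_unity p z2"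
  shows "absv (1 - z2) \<le> absv (1 - z1)"
proof -
  have p0: "0 < p" using prime_p prime_gt_0_nat by blast
  obtain j where "z2 = z1 ^ j" using roots_are_powers[OF z1 _ p0] z2 unfolding primitive_root_of_unity_def by blast
  moreover have "absv z1 = 1" using av_root_unity z1 p0 unfolding primitive_root_of_unity_def by blast
  ultimately show ?thesis using one_minus_pow_le by simp
qed

definition ap :: real where "ap = absv (1 - (SOME z. primitive_root_of_unity p z))"

lemma ap_eq:
  fixes z :: 'k assumes "primitive_root_of_unity p z" shows "ap = absv (1 - z)"
proof -
  have "primitive_root_of_unity p (SOME z::'k. primitive_root_of_unity p z)" by (rule someI_ex) (use assms in blast)
  then show ?thesis unfolding ap_def using prim_dist_le assms by (meson antisym)
qed

lemma ap_pos_le: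
  fixes z :: 'k assumes "primitive_root_of_unity p z" shows "0 < ap" "ap \<le> 1"
proof -
  have p2: "2 \<le> p" using prime_p prime_ge_2_nat by blast
  show "0 < ap" using ap_eq[OF assms] av_pos prim_root_ne_1[OF assms p2] by simp
  have "absv z = 1" using av_root_unity[of z p] assms p2 unfolding primitive_root_of_unity_def by simp
  then show "ap \<le> 1" using ap_eq[OF assms] av_one_minus_le by simp
qed

text \<open>The factor of alpha_p(m,n) contributed by the cyclic factor of order m; it is the
minimal distance |1 - z^k| for z a primitive m-th root of unity and 0 < k < m.\<close>
definition af :: "nat \<Rightarrow> real" where "af m = ap ^ eps p m"

lemma af_props:
  fixes z :: 'k
  assumes z: "primitive_root_of_unity m z" and m: "0 < m"
  shows "0 < af m" "af m \<le> 1"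
proof -
  have "0 < af m \<and> af m \<le> 1"
  proof (cases "p dvd m")
    case True
    have p0: "0 < p" using prime_p prime_gt_0_nat by blast
    have "primitive_root_of_unity p (z ^ (m div p))" using prim_pow_prim[OF z True p0 m] .
    then show ?thesis using ap_pos_le True unfolding af_def eps_def by simp
  next
    case False then show ?thesis unfolding af_def eps_def by simp
  qed
  then show "0 < af m" "af m \<le> 1" by auto
qed

lemma af_lower:
  assumes z: "primitive_root_of_unity m z" and m: "0 < m" and k: "0 < k" "k < m"
  shows "af m \<le> absv (1 - z ^ k)"
proof -
  have ne: "z ^ k \<noteq> 1" using z k unfolding primitive_root_of_unity_def by blast
  have "(z ^ k) ^ m = 1" using z unfolding primitive_root_of_unity_def
    by (metis mult.commute power_mult power_one)
  from root_dist_lower[OF this m ne] show ?thesis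
  proof
    assume "1 \<le> absv (1 - z ^ k)" then show ?thesis using af_props[OF z m] by linarith
  next
    assume "p dvd m \<and> (\<exists>za. primitive_root_of_unity p za \<and> absv (1 - za) \<le> absv (1 - z ^ k))"
    then obtain za where "p dvd m" "primitive_root_of_unity p za" "absv (1 - za) \<le> absv (1 - z ^ k)" by blast
    then show ?thesis unfolding af_def eps_def using ap_eq by simp
  qed
qed

lemma alpha_eq: "alpha absv p m n = af m * af n"
  unfolding alpha_def af_def ap_def by (simp add: power_add)

text \<open>An exponent attaining the minimum af m: m/p if p divides m, and 1 otherwise.\<close>
definition af_exponent :: "nat \<Rightarrow> nat" where
  "af_exponent m = (if p dvd m then m div p else 1)"

lemma af_exponent_props:
  assumes z: "primitive_root_of_unity m z" and m: "2 \<le> m"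
  shows "0 < af_exponent m" "af_exponent m < m" "z ^ af_exponent m \<noteq> 1" "absv (1 - z ^ af_exponent m) \<le> af m"
proof -
  have p1: "1 < p" using prime_p prime_gt_1_nat by blast
  have p0: "0 < p" using p1 by simp
  show k0: "0 < af_exponent m"
  proof (cases "p dvd m")
    case True
    then obtain c where "m = p * c" by blast
    then show ?thesis using m p0 unfolding af_exponent_def by (cases c) auto
  qed (simp add: af_exponent_def)
  show k1: "af_exponent m < m" unfolding af_exponent_def using m p1 by auto
  show "z ^ af_exponent m \<noteq> 1" using z k0 k1 unfolding primitive_root_of_unity_def by blast
  have "absv z = 1" using av_root_unity z m unfolding primitive_root_of_unity_def by auto
  then show "absv (1 - z ^ af_exponent m) \<le> af m"
  proof (cases "p dvd m")
    case True
    have "primitive_root_of_unity p (z ^ (m div p))" using prim_pow_prim[OF z True p0] m by simp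
    then show ?thesis using True ap_eq unfolding af_def eps_def af_exponent_def by simp
  next
    case False
    then show ?thesis unfolding af_def eps_def af_exponent_def using av_one_minus_le \<open>absv z = 1\<close> by simp
  qed
qed

end

text \<open>Sm z = diag(z, 1) is the rotation about 0 and infinity with multiplier z; Tm l f is
the element with fixed points 1 and l and multiplier f at 1.\<close>
definition Sm :: "'k::field \<Rightarrow> 'k m2" where "Sm z = (z, 0, 0, 1)"
definition Tm :: "'k::field \<Rightarrow> 'k \<Rightarrow> 'k m2" where
  "Tm l f = (l * f - 1, l * (1 - f), f - 1, l - f)"

lemma Sm_mult: "m2_mult (Sm a) (Sm b) = Sm (a * b)" by (simp add: Sm_def)

lemma Sm_pow: "m2_pow (Sm z) k = Sm (z ^ k)"
  by (induction k) (auto simp: m2_pow_Suc Sm_mult Sm_def m2_id_def)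

lemma Sm_det: "m2_det (Sm z) = z" by (simp add: Sm_def)

lemma Tm_mult: "m2_mult (Tm l a) (Tm l b) = m2_smult (l - 1) (Tm l (a * b))"
  by (simp add: Tm_def algebra_simps)

lemma Tm_pow: "0 < k \<Longrightarrow> m2_pow (Tm l f) k = m2_smult ((l - 1) ^ (k - 1)) (Tm l (f ^ k))"
proof (induction k)
  case (Suc k)
  show ?case
  proof (cases "k = 0")
    case True then show ?thesis by (simp add: m2_pow_def)
  next
    case False
    then have "m2_pow (Tm l f) (Suc k) = m2_mult (Tm l f) (m2_smult ((l - 1) ^ (k - 1)) (Tm l (f ^ k)))"
      using Suc by (simp add: m2_pow_Suc)
    also have "\<dots> = m2_smult ((l - 1) ^ (k - 1) * (l - 1)) (Tm l (f * f ^ k))"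
      by (simp add: m2_smult_mult_right Tm_mult m2_smult_smult)
    also have "(l - 1) ^ (k - 1) * (l - 1) = (l - 1) ^ (Suc k - 1)"
      using False by (cases k) (auto simp: mult.commute)
    finally show ?thesis by simp
  qed
qed simp

lemma Tm_pow_proj_eq: "(l::'k::field) \<noteq> 1 \<Longrightarrow> 0 < k \<Longrightarrow> proj_eq (m2_pow (Tm l f) k) (Tm l (f ^ k))"
  by (simp add: Tm_pow proj_eq_smult)

lemma Tm_det: "m2_det (Tm l f) = (l - 1)^2 * f"
  by (simp add: Tm_def algebra_simps power2_eq_square)

lemma Sm_proj_id: "proj_eq (Sm z) m2_id \<longleftrightarrow> z = 1"
  by (auto simp: proj_eq_id_iff Sm_def)

lemma Tm_proj_id: "(l::'k::field) \<noteq> 1 \<Longrightarrow> proj_eq (Tm l f) m2_id \<longleftrightarrow> f = 1"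
  by (auto simp: proj_eq_id_iff Tm_def)

lemma Sm_order: "0 < m \<Longrightarrow> pgl_has_order (Sm z) m \<longleftrightarrow> primitive_root_of_unity m z"
  by (simp add: pgl_has_order_def Sm_pow Sm_proj_id primitive_root_of_unity_def)

lemma Tm_pow_proj_id: "(l::'k::field) \<noteq> 1 \<Longrightarrow> 0 < k \<Longrightarrow> proj_eq (m2_pow (Tm l f) k) m2_id \<longleftrightarrow> f ^ k = 1"
  by (simp add: Tm_pow proj_eq_smult_left_iff Tm_proj_id)

lemma Tm_order: "(l::'k::field) \<noteq> 1 \<Longrightarrow> 0 < n \<Longrightarrow> pgl_has_order (Tm l f) n \<longleftrightarrow> primitive_root_of_unity n f"
  by (simp add: pgl_has_order_def Tm_pow_proj_id primitive_root_of_unity_def)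

lemma Sm_fixed: "(z::'k::field) \<noteq> 1 \<Longrightarrow> fixed_points (Sm z) = {Some 0, None}"
proof -
  assume z: "z \<noteq> 1"
  have "mobius (Sm z) w = w \<longleftrightarrow> w = Some 0 \<or> w = None" for w
  proof (cases w)
    case (Some x)
    then show ?thesis using z by (auto simp: Sm_def)
  qed (simp add: Sm_def)
  then show ?thesis unfolding fixed_points_def by auto
qed

lemma Tm_fixed:
  fixes l f :: "'k::field"
  assumes l: "l \<noteq> 1" and f: "f \<noteq> 1" "f \<noteq> 0"
  shows "fixed_points (Tm l f) = {Some 1, Some l}"
proof -
  have "mobius (Tm l f) w = w \<longleftrightarrow> w = Some 1 \<or> w = Some l" for w
  proof (cases w)
    case None
    then show ?thesis using f by (simp add: Tm_def)
  next
    case (Some x)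
    have key: "(l * f - 1) * x + l * (1 - f) = x * ((f - 1) * x + (l - f)) \<longleftrightarrow> x = 1 \<or> x = l"
    proof -
      have "(l * f - 1) * x + l * (1 - f) - x * ((f - 1) * x + (l - f)) = - (f - 1) * ((x - 1) * (x - l))"
        by (simp add: algebra_simps)
      then have "(l * f - 1) * x + l * (1 - f) = x * ((f - 1) * x + (l - f)) \<longleftrightarrow> (x - 1) * (x - l) = 0"
        using f by (metis eq_iff_diff_eq_0 mult_eq_0_iff neg_equal_0_iff_equal right_minus_eq)
      then show ?thesis by simp
    qed
    have d1: "(f - 1) * 1 + (l - f) \<noteq> 0" using l by simp
    have d2: "(f - 1) * l + (l - f) \<noteq> 0"
    proof -
      have "(f - 1) * l + (l - f) = f * (l - 1)" by (simp add: algebra_simps)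
      then show ?thesis using l f by simp
    qed
    show ?thesis
    proof
      assume "mobius (Tm l f) w = w"
      then have "(f - 1) * x + (l - f) \<noteq> 0 \<and> ((l * f - 1) * x + l * (1 - f)) / ((f - 1) * x + (l - f)) = x"
        using Some by (auto simp: Tm_def split: if_splits)
      then have "(l * f - 1) * x + l * (1 - f) = x * ((f - 1) * x + (l - f))"
        by (simp add: divide_eq_eq)
      then show "w = Some 1 \<or> w = Some l" using key Some by simp
    next
      assume "w = Some 1 \<or> w = Some l"
      then have x: "x = 1 \<or> x = l" using Some by simp
      then have eq: "(l * f - 1) * x + l * (1 - f) = x * ((f - 1) * x + (l - f))" using key by simp
      have ne: "(f - 1) * x + (l - f) \<noteq> 0" using x d1 d2 by auto
      show "mobius (Tm l f) w = w" using Some eq ne by (simp add: Tm_def divide_eq_eq)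
    qed
  qed
  then show ?thesis unfolding fixed_points_def by auto
qed

lemma fixed_0_inf_normal_form:
  fixes s :: "'k::field m2"
  assumes fs: "fixed_points s = {Some 0, None}"
  shows "\<exists>z. proj_eq s (Sm z)"
proof -
  obtain sa sb sc sd where S: "s = (sa, sb, sc, sd)" by (cases s rule: prod_cases4)
  have "None \<in> fixed_points s" using fs by simp
  then have sc: "sc = 0" using S unfolding fixed_points_def by (auto split: if_splits)
  have "Some 0 \<in> fixed_points s" using fs by simp
  then have sbd: "sd \<noteq> 0 \<and> sb = 0" using S sc unfolding fixed_points_def by (auto split: if_splits)
  then have "s = m2_smult sd (Sm (sa / sd))" using S sc unfolding Sm_def by simp
  then show ?thesis using sbd proj_eq_smult by metis
qed

text \<open>An element fixing exactly 1 and l (l \<noteq> 1) is projectively some Tm l f: the two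
fixed-point equations determine the matrix up to the parameters c and d.\<close>
lemma fixed_1_l_normal_form:
  fixes t :: "'k::field m2" and l :: 'k
  assumes ft: "fixed_points t = {Some 1, Some l}" and l: "l \<noteq> 1"
  shows "\<exists>f. proj_eq t (Tm l f)"
proof -
  obtain a b c d where T: "t = (a, b, c, d)" by (cases t rule: prod_cases4)
  have "Some 1 \<in> fixed_points t" using ft by simp
  then have f1: "c + d \<noteq> 0 \<and> a + b = c + d" using T unfolding fixed_points_def
    by (auto split: if_splits simp: divide_eq_eq)
  have "Some l \<in> fixed_points t" using ft by simp
  then have f2: "a * l + b = l * (c * l + d)" using T unfolding fixed_points_def
    by (auto split: if_splits simp: divide_eq_eq)
  have "(a - (c * (l + 1) + d)) * (l - 1) = 0" using f1 f2 by algebra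
  then have a: "a = c * (l + 1) + d" using l by simp
  have b: "b = - c * l" using f1 a by algebra
  define f where "f = (c * l + d) / (c + d)"
  have "(c + d) * f = c * l + d" unfolding f_def using f1 by simp
  then have "m2_smult (c + d) (Tm l f) = m2_smult (l - 1) t"
    unfolding Tm_def T a b by (simp only: m2_smult.simps prod.inject) algebra
  then have "proj_eq t (Tm l f)" using f1 l proj_eq_of_smult_eq[of "l - 1" "c + d"] by simp
  then show ?thesis by blast
qed

lemma generator_normal_forms:
  fixes s t :: "'k::field m2"
  assumes os: "pgl_has_order s m" and ot: "pgl_has_order t n" and m: "0 < m" and n: "0 < n"
    and fs: "fixed_points s = {Some 0, None}" and ft: "fixed_points t = {Some 1, Some l}"
    and l: "l \<noteq> 1"
  obtains z f where "primitive_root_of_unity m z" "proj_eq s (Sm z)"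
    "primitive_root_of_unity n f" "proj_eq t (Tm l f)"
proof -
  obtain \<zeta> where pS: "proj_eq s (Sm \<zeta>)" using fixed_0_inf_normal_form[OF fs] by blast
  obtain \<eta> where pT: "proj_eq t (Tm l \<eta>)" using fixed_1_l_normal_form[OF ft l] by blast
  have "pgl_has_order (Sm \<zeta>) m" using os order_proj_eq[OF pS] by simp
  then have "primitive_root_of_unity m \<zeta>" using Sm_order[of m \<zeta>] m by simp
  moreover have "pgl_has_order (Tm l \<eta>) n" using ot order_proj_eq[OF pT] by simp
  then have "primitive_root_of_unity n \<eta>" using Tm_order[of l n \<eta>] l n by simp
  ultimately show ?thesis using that pS pT by blast
qed

lemma eval_word_Nil [simp]: "eval_word s t [] = m2_id"
  by (simp add: eval_word_def)

lemma eval_word_Cons [simp]: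
  "eval_word s t ((b, k) # w) = m2_mult (m2_pow (if b then s else t) k) (eval_word s t w)"
  by (simp add: eval_word_def)

lemma reduced_Nil [simp]: "reduced_word m n []"
  by (simp add: reduced_word_def)

lemma all_nat_split: "(\<forall>i::nat. P i) \<longleftrightarrow> P 0 \<and> (\<forall>i. P (Suc i))"
  by (metis nat.exhaust)

lemma reduced_Cons:
  "reduced_word m n ((b, k) # w) \<longleftrightarrow>
     0 < k \<and> k < (if b then m else n) \<and> reduced_word m n w \<and> (w \<noteq> [] \<longrightarrow> fst (hd w) \<noteq> b)"
  unfolding reduced_word_def
  by (subst all_nat_split) (cases w; auto simp: All_less_Suc2)

text \<open>Since s^m and t^n are trivial in PGL_2, adj s and adj t are represented by s^(m-1) and
t^(n-1), and a power of s (or t) can be absorbed into a reduced word.\<close>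
lemma adj_proj_pow:
  fixes M :: "'k::field m2"
  assumes det: "m2_det M \<noteq> 0" and m: "0 < m" and o: "proj_eq (m2_pow M m) m2_id"
  shows "proj_eq (m2_adj M) (m2_pow M (m - 1))"
proof -
  obtain m' where m': "m = Suc m'" using m by (cases m) auto
  have "m2_mult (m2_adj M) (m2_pow M m) = m2_mult (m2_mult (m2_adj M) M) (m2_pow M m')"
    unfolding m' m2_pow_Suc m2_mult_assoc ..
  also have "\<dots> = m2_smult (m2_det M) (m2_pow M (m - 1))"
    unfolding m2_adj_mult m2_smult_mult_left m' by simp
  finally have "m2_mult (m2_adj M) (m2_pow M m) = m2_smult (m2_det M) (m2_pow M (m - 1))" .
  moreover have "proj_eq (m2_mult (m2_adj M) (m2_pow M m)) (m2_mult (m2_adj M) m2_id)"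
    by (rule proj_eq_mult[OF proj_eq_refl o])
  ultimately have "proj_eq (m2_smult (m2_det M) (m2_pow M (m - 1))) (m2_adj M)" by simp
  then show ?thesis using det proj_eq_smult_left_iff proj_eq_sym by blast
qed

lemma prepend_word:
  fixes s t :: "'k::field m2"
  assumes os: "proj_eq (m2_pow s m) m2_id" and ot: "proj_eq (m2_pow t n) m2_id"
    and r: "reduced_word m n w" and a: "0 < a" "a < (if b then m else n)"
  shows "\<exists>w'. reduced_word m n w' \<and> proj_eq (m2_mult (m2_pow (if b then s else t) a) (eval_word s t w)) (eval_word s t w')"
proof (cases w)
  case Nil
  then show ?thesis using a by (intro exI[of _ "[(b, a)]"]) (simp add: reduced_Cons)
next
  case (Cons x w2)
  obtain b' k where x: "x = (b', k)" by (cases x)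
  have r2: "0 < k" "k < (if b' then m else n)" "reduced_word m n w2" "w2 \<noteq> [] \<longrightarrow> fst (hd w2) \<noteq> b'"
    using r unfolding Cons x reduced_Cons by auto
  define M where "M = (if b then s else t)"
  define od where "od = (if b then m else n)"
  have oM: "proj_eq (m2_pow M od) m2_id" using os ot unfolding M_def od_def by simp
  show ?thesis
  proof (cases "b' = b")
    case False
    then show ?thesis using a r Cons x
      by (intro exI[of _ "(b, a) # w"]) (auto simp: reduced_Cons)
  next
    case True
    have ev: "m2_mult (m2_pow M a) (eval_word s t w) = m2_mult (m2_pow M (a + k)) (eval_word s t w2)"
      using Cons x True by (simp add: M_def m2_pow_add m2_mult_assoc)
    consider "a + k = od" | "a + k < od" | "od < a + k" by linarith
    then show ?thesis
    proof cases
      case 1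
      have "proj_eq (m2_mult (m2_pow M (a + k)) (eval_word s t w2)) (m2_mult m2_id (eval_word s t w2))"
        using 1 oM by (intro proj_eq_mult) auto
      then show ?thesis using ev r2 by (intro exI[of _ w2]) (simp add: M_def)
    next
      case 2
      then show ?thesis using ev r2 True a unfolding od_def
        by (intro exI[of _ "(b, a + k) # w2"]) (simp add: reduced_Cons M_def)
    next
      case 3
      have "m2_pow M (a + k) = m2_mult (m2_pow M od) (m2_pow M (a + k - od))"
        using 3 by (simp add: m2_pow_add[symmetric])
      then have "proj_eq (m2_mult (m2_pow M (a + k)) (eval_word s t w2))
                   (m2_mult (m2_mult m2_id (m2_pow M (a + k - od))) (eval_word s t w2))"
        using proj_eq_mult[OF proj_eq_mult[OF oM proj_eq_refl] proj_eq_refl] by simp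
      moreover have "reduced_word m n ((b, a + k - od) # w2)"
        using 3 r2 True a unfolding od_def by (auto simp: reduced_Cons)
      ultimately show ?thesis using ev
        by (intro exI[of _ "(b, a + k - od) # w2"]) (simp add: M_def)
    qed
  qed
qed

lemma normal_form:
  fixes s t :: "'k::field m2"
  assumes ds: "m2_det s \<noteq> 0" and dt: "m2_det t \<noteq> 0"
    and m: "2 \<le> m" and n: "2 \<le> n"
    and os: "proj_eq (m2_pow s m) m2_id" and ot: "proj_eq (m2_pow t n) m2_id"
  shows "set ws \<subseteq> {s, t, m2_adj s, m2_adj t} \<Longrightarrow> \<exists>w. reduced_word m n w \<and> proj_eq (m2_prod ws) (eval_word s t w)"
proof (induction ws)
  case Nil
  then show ?case by (intro exI[of _ "[]"]) simp
next
  case (Cons x ws)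
  then obtain w where w: "reduced_word m n w" "proj_eq (m2_prod ws) (eval_word s t w)" by auto
  have "\<exists>b a. 0 < a \<and> a < (if b then m else n) \<and> proj_eq x (m2_pow (if b then s else t) a)"
  proof -
    have "x = s \<or> x = t \<or> x = m2_adj s \<or> x = m2_adj t" using Cons.prems by auto
    then show ?thesis
    proof (elim disjE)
      assume "x = s" then show ?thesis using m by (intro exI[of _ True] exI[of _ 1]) auto
    next
      assume "x = t" then show ?thesis using n by (intro exI[of _ False] exI[of _ 1]) auto
    next
      assume "x = m2_adj s" then show ?thesis using m adj_proj_pow[OF ds _ os]
        by (intro exI[of _ True] exI[of _ "m - 1"]) auto
    next
      assume "x = m2_adj t" then show ?thesis using n adj_proj_pow[OF dt _ ot]
        by (intro exI[of _ False] exI[of _ "n - 1"]) auto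
    qed
  qed
  then obtain b a where ba: "0 < a" "a < (if b then m else n)" "proj_eq x (m2_pow (if b then s else t) a)" by blast
  obtain w' where w': "reduced_word m n w'"
     "proj_eq (m2_mult (m2_pow (if b then s else t) a) (eval_word s t w)) (eval_word s t w')"
    using prepend_word[OF os ot w(1) ba(1,2)] by blast
  have "proj_eq (m2_prod (x # ws)) (m2_mult (m2_pow (if b then s else t) a) (eval_word s t w))"
    using ba(3) w(2) by (simp add: proj_eq_mult)
  then show ?case using w' proj_eq_trans by blast
qed

lemma eval_word_in_gen: "eval_word s t w \<in> gen_group s t"
proof -
  define ws where "ws = concat (map (\<lambda>(b, k). replicate k (if b then s else t)) w)"
  have "m2_prod ws = eval_word s t w"
    unfolding ws_def eval_word_def m2_prod_concat
    by (induction w) (auto simp: m2_prod_replicate)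
  moreover have "set ws \<subseteq> {s, t, m2_adj s, m2_adj t}" unfolding ws_def by auto
  ultimately show ?thesis unfolding gen_group_def by (auto intro!: exI[of _ ws])
qed

definition alt_word :: "nat \<Rightarrow> nat \<Rightarrow> nat \<Rightarrow> (bool \<times> nat) list" where
  "alt_word a b j = concat (replicate j [(True, a), (False, b)])"

lemma alt_word_Suc: "alt_word a b (Suc j) = (True, a) # (False, b) # alt_word a b j"
  by (simp add: alt_word_def)

lemma alt_word_reduced:
  "0 < a \<Longrightarrow> a < m \<Longrightarrow> 0 < b \<Longrightarrow> b < n \<Longrightarrow> reduced_word m n (alt_word a b j)"
proof (induction j)
  case 0 then show ?case by (simp add: alt_word_def)
next
  case (Suc j)
  have "alt_word a b j = [] \<or> fst (hd (alt_word a b j)) = True"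
    by (cases j) (auto simp: alt_word_Suc alt_word_def)
  then show ?case using Suc by (auto simp: alt_word_Suc reduced_Cons)
qed

lemma alt_word_eval: "eval_word s t (alt_word a b j) = m2_pow (m2_mult (m2_pow s a) (m2_pow t b)) j"
  by (induction j) (auto simp: alt_word_def alt_word_Suc m2_pow_Suc m2_mult_assoc)

lemma alt_word_ne: "0 < j \<Longrightarrow> alt_word a b j \<noteq> []"
  by (cases j) (auto simp: alt_word_Suc)

section \<open>Ping-pong on K^2\<close>

text \<open>Matrices act on column vectors (x, y), the homogeneous coordinates of x / y.\<close>
fun mv :: "'k::comm_ring_1 m2 \<Rightarrow> 'k \<times> 'k \<Rightarrow> 'k \<times> 'k" where
  "mv (a, b, c, d) (x, y) = (a * x + b * y, c * x + d * y)"

lemma mv_mult: "mv (m2_mult M N) v = mv M (mv N v)"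
  by (cases M rule: prod_cases4; cases N rule: prod_cases4; cases v) (simp add: algebra_simps)

lemma mv_smult: "mv (m2_smult c M) (x, y) = (c * fst (mv M (x, y)), c * snd (mv M (x, y)))"
  by (cases M rule: prod_cases4) (simp add: algebra_simps)

lemma mv_Sm: "mv (Sm w) (x, y) = (w * x, y)"
  by (simp add: Sm_def)

text \<open>In the coordinates x - y and y the action of Tm l f is triangular.\<close>
lemma mv_Tm:
  fixes l f x y :: "'k::field"
  assumes "mv (Tm l f) (x, y) = (P, Q)"
  shows "P - Q = f * (l - 1) * (x - y)" "Q = (f - 1) * (x - y) + (l - 1) * y"
proof -
  have P: "P = (l * f - 1) * x + l * (1 - f) * y" and Q: "Q = (f - 1) * x + (l - f) * y"
    using assms by (auto simp: Tm_def)
  show "P - Q = f * (l - 1) * (x - y)" unfolding P Q by algebra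
  show "Q = (f - 1) * (x - y) + (l - 1) * y" unfolding Q by algebra
qed

lemma pingpong_word:
  fixes s t :: "'k::field m2"
  assumes map: "\<And>b k u. 0 < k \<Longrightarrow> k < (if b then m else n) \<Longrightarrow> u \<in> src b \<Longrightarrow>
                   mv (m2_pow (if b then s else t) k) u \<in> src (\<not> b)"
  shows "reduced_word m n w \<Longrightarrow> w \<noteq> [] \<Longrightarrow> v \<in> src (fst (last w)) \<Longrightarrow>
    \<exists>u \<in> src (fst (hd w)).
       mv (eval_word s t w) v = mv (m2_pow (if fst (hd w) then s else t) (snd (hd w))) u"
proof (induction w)
  case (Cons x w)
  obtain b k where x: "x = (b, k)" by (cases x)
  show ?case
  proof (cases "w = []")
    case True
    then show ?thesis using Cons.prems x by (auto simp: eval_word_def)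
  next
    case False
    have r: "0 < k" "k < (if b then m else n)" "reduced_word m n w" "fst (hd w) \<noteq> b"
      using Cons.prems(1) False unfolding x reduced_Cons by auto
    have "v \<in> src (fst (last w))" using Cons.prems False by simp
    from Cons.IH[OF r(3) False this] obtain u where
      u: "u \<in> src (fst (hd w))"
        "mv (eval_word s t w) v = mv (m2_pow (if fst (hd w) then s else t) (snd (hd w))) u"
      by blast
    have r2: "0 < snd (hd w)" "snd (hd w) < (if fst (hd w) then m else n)"
      using r(3) False unfolding reduced_word_def by (metis hd_conv_nth length_greater_0_conv)+
    have "mv (eval_word s t w) v \<in> src b" using map[OF r2 u(1)] u(2) r(4) by (metis (full_types))
    then show ?thesis using x by (auto simp: mv_mult)
  qed
qed simp

locale pingpong = padic p absv
  for p :: nat and absv :: "'k::field_char_0 \<Rightarrow> real" +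
  fixes m n :: nat and z e l :: 'k
  assumes z: "primitive_root_of_unity m z" and e: "primitive_root_of_unity n e"
    and m: "2 \<le> m" and n: "2 \<le> n" and l: "l \<noteq> 1"
    and small: "absv (l - 1) < af m * af n"
begin

definition delta :: real where "delta = absv (l - 1)"

definition rho :: real where "rho = delta / af n"

text \<open>The two ping-pong sets: vectors whose slope x / y is rho-close to the fixed point 1 of t
(exchanged into the complement by powers of s), and the rest.\<close>
definition Ycone :: "('k \<times> 'k) set" where
  "Ycone = {(x, y). (x, y) \<noteq> (0, 0) \<and> absv (x - y) \<le> rho * absv y}"

definition Xcone :: "('k \<times> 'k) set" where
  "Xcone = {(x, y). (x, y) \<noteq> (0, 0) \<and> rho * absv y < absv (x - y)}"

lemma af_bounds: "0 < af m" "af m \<le> 1" "0 < af n" "af n \<le> 1"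
  using af_props[OF z] af_props[OF e] m n by auto

lemma rho_bounds: "0 < delta" "delta \<le> rho" "rho * af n = delta" "rho < af m" "rho < 1"
proof -
  show "0 < delta" unfolding delta_def using l av_pos by simp
  then show "delta \<le> rho" unfolding rho_def using af_bounds by (simp add: le_divide_eq)
  show "rho * af n = delta" unfolding rho_def using af_bounds by simp
  show "rho < af m" unfolding rho_def delta_def using af_bounds small by (simp add: divide_less_eq)
  then show "rho < 1" using af_bounds by linarith
qed

lemma roots_unit: "absv z = 1" "absv e = 1"
  using av_root_unity z e m n unfolding primitive_root_of_unity_def by auto

lemma cone_smult:
  assumes "c \<noteq> 0"
  shows "(c * x, c * y) \<in> Xcone \<longleftrightarrow> (x, y) \<in> Xcone" "(c * x, c * y) \<in> Ycone \<longleftrightarrow> (x, y) \<in> Ycone"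
proof -
  have "absv (c * x - c * y) = absv c * absv (x - y)" "rho * absv (c * y) = absv c * (rho * absv y)"
    by (simp_all add: right_diff_distrib[symmetric] av_mult)
  then show "(c * x, c * y) \<in> Xcone \<longleftrightarrow> (x, y) \<in> Xcone" "(c * x, c * y) \<in> Ycone \<longleftrightarrow> (x, y) \<in> Ycone"
    unfolding Xcone_def Ycone_def using av_pos[OF assms] assms rho_bounds(1,2) by auto
qed

lemma Ycone_unit: "(x, y) \<in> Ycone \<Longrightarrow> y \<noteq> 0 \<and> absv x = absv y"
proof -
  assume h: "(x, y) \<in> Ycone"
  then have y0: "y \<noteq> 0" unfolding Ycone_def using av_pos[of x] by auto
  have "absv (x - y) \<le> rho * absv y" using h unfolding Ycone_def by auto
  also have "\<dots> < absv y" using rho_bounds av_pos[OF y0] by simp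
  finally have "absv ((x - y) + y) = absv y" by (rule av_strict)
  then show ?thesis using y0 by simp
qed

text \<open>Nontrivial powers of s move Ycone into Xcone, because |z^k - 1| >= af m > rho.\<close>
lemma s_pow_maps_Ycone:
  assumes k: "0 < k" "k < m" and u: "u \<in> Ycone"
  shows "mv (m2_pow (Sm z) k) u \<in> Xcone"
proof -
  obtain x y where u': "u = (x, y)" by (cases u)
  have y0: "y \<noteq> 0" using Ycone_unit u u' by blast
  define w where "w = z ^ k"
  have aw: "absv w = 1" unfolding w_def by (simp add: av_power roots_unit)
  have low: "af m \<le> absv (w - 1)"
    using af_lower[OF z _ k] m unfolding w_def by (simp add: av_diff_sym)
  have "absv (w * (x - y)) = absv (x - y)" by (simp add: av_mult aw)
  also have "\<dots> \<le> rho * absv y" using u u' unfolding Ycone_def by auto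
  also have "\<dots> < af m * absv y" using rho_bounds av_pos[OF y0] by simp
  also have "\<dots> \<le> absv ((w - 1) * y)" using low by (simp add: av_mult mult_right_mono)
  finally have "absv (w * (x - y) + (w - 1) * y) = absv ((w - 1) * y)" by (rule av_strict)
  moreover have "w * (x - y) + (w - 1) * y = w * x - y" by algebra
  ultimately have "absv (w * x - y) = absv (w - 1) * absv y" by (simp add: av_mult)
  moreover have "rho * absv y < af m * absv y" using rho_bounds av_pos[OF y0] by simp
  moreover have "af m * absv y \<le> absv (w - 1) * absv y" using low by (simp add: mult_right_mono)
  ultimately have "rho * absv y < absv (w * x - y)" by linarith
  then show ?thesis using u' y0 unfolding Sm_pow Xcone_def w_def by (simp add: mv_Sm)
qed

lemma Tm_estimate:
  assumes k: "0 < k" "k < n" and u: "(x, y) \<in> Xcone" and PQ: "mv (Tm l (e ^ k)) (x, y) = (P, Q)"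
  shows "absv (P - Q) = delta * absv (x - y)" "absv Q \<le> absv (x - y)"
    "af n * absv (x - y) \<le> absv Q"
proof -
  define f where "f = e ^ k"
  have af: "absv f = 1" unfolding f_def by (simp add: av_power roots_unit)
  have low: "af n \<le> absv (f - 1)" using af_lower[OF e _ k] n unfolding f_def by (simp add: av_diff_sym)
  have f1: "absv (f - 1) \<le> 1" using av_one_minus_le[OF af] by (simp add: av_diff_sym)
  have PQ': "P - Q = f * (l - 1) * (x - y)" "Q = (f - 1) * (x - y) + (l - 1) * y"
    using mv_Tm[OF PQ[folded f_def]] by auto
  have xy: "rho * absv y < absv (x - y)" using u unfolding Xcone_def by auto
  have "absv ((l - 1) * y) = delta * absv y" by (simp add: av_mult delta_def)
  also have "\<dots> = af n * (rho * absv y)" using rho_bounds(3) by (simp add: algebra_simps)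
  also have "\<dots> < af n * absv (x - y)" using xy af_bounds by simp
  also have "\<dots> \<le> absv ((f - 1) * (x - y))" using low by (simp add: av_mult mult_right_mono)
  finally have Qeq: "absv Q = absv (f - 1) * absv (x - y)"
    using av_strict PQ'(2) by (simp add: av_mult add.commute)
  show "absv (P - Q) = delta * absv (x - y)" using PQ'(1) af by (simp add: av_mult delta_def)
  show "absv Q \<le> absv (x - y)" using Qeq f1 by (simp add: mult_left_le_one_le)
  show "af n * absv (x - y) \<le> absv Q" using Qeq low by (simp add: mult_right_mono)
qed

lemma Tm_pow_mv:
  "0 < k \<Longrightarrow> mv (m2_pow (Tm l e) k) (x, y) =
     ((l - 1) ^ (k - 1) * fst (mv (Tm l (e ^ k)) (x, y)), (l - 1) ^ (k - 1) * snd (mv (Tm l (e ^ k)) (x, y)))"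
  unfolding Tm_pow mv_smult ..

lemma t_pow_maps_Xcone:
  assumes k: "0 < k" "k < n" and u: "u \<in> Xcone"
  shows "mv (m2_pow (Tm l e) k) u \<in> Ycone"
proof -
  obtain x y where u': "u = (x, y)" by (cases u)
  obtain P Q where PQ: "mv (Tm l (e ^ k)) (x, y) = (P, Q)" by (cases "mv (Tm l (e ^ k)) (x, y)")
  note T = Tm_estimate[OF k u[unfolded u'] PQ]
  have "0 < absv (x - y)" using u u' rho_bounds unfolding Xcone_def
    by (smt (verit) av_nonneg case_prod_conv mem_Collect_eq mult_nonneg_nonneg)
  then have "0 < absv Q" using T(3) af_bounds by (smt (verit) mult_pos_pos)
  then have Q0: "Q \<noteq> 0" by auto
  have "absv (P - Q) = rho * (af n * absv (x - y))" using T(1) rho_bounds by (simp add: algebra_simps)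
  also have "\<dots> \<le> rho * absv Q" using T(3) rho_bounds by (simp add: mult_left_mono)
  finally have "(P, Q) \<in> Ycone" unfolding Ycone_def using Q0 by simp
  moreover have "(l - 1) ^ (k - 1) \<noteq> 0" using l by simp
  ultimately show ?thesis using cone_smult u' PQ Tm_pow_mv[OF k(1)] by simp
qed

text \<open>The ping-pong set attached to each generator (True for s, False for t).\<close>
definition cone :: "bool \<Rightarrow> ('k \<times> 'k) set" where "cone b = (if b then Ycone else Xcone)"

lemma cone_map:
  "0 < k \<Longrightarrow> k < (if b then m else n) \<Longrightarrow> u \<in> cone b \<Longrightarrow>
     mv (m2_pow (if b then Sm z else Tm l e) k) u \<in> cone (\<not> b)"
  using s_pow_maps_Ycone t_pow_maps_Xcone unfolding cone_def by (cases b) auto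

lemma first_syllable:
  assumes w: "reduced_word m n w" "w \<noteq> []" and v: "v \<in> cone (fst (last w))"
  shows "\<exists>u \<in> cone (fst (hd w)). 0 < snd (hd w) \<and> snd (hd w) < (if fst (hd w) then m else n) \<and>
           mv (eval_word (Sm z) (Tm l e) w) v
             = mv (m2_pow (if fst (hd w) then Sm z else Tm l e) (snd (hd w))) u"
proof -
  have "0 < snd (hd w) \<and> snd (hd w) < (if fst (hd w) then m else n)"
    using w unfolding reduced_word_def by (metis hd_conv_nth length_greater_0_conv)
  then show ?thesis using pingpong_word[where src = cone, OF cone_map w v] by blast
qed

lemma word_image_11:
  assumes w: "reduced_word m n w" "w \<noteq> []" "fst (last w)"
    and XY: "mv (eval_word (Sm z) (Tm l e) w) (1, 1) = (X, Y)"
  shows "delta * absv Y \<le> absv (X - Y)"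
proof -
  have "(1, 1) \<in> cone (fst (last w))" using w(3) rho_bounds unfolding cone_def Ycone_def by simp
  from first_syllable[OF w(1,2) this] obtain b k u where
    u: "u \<in> cone b" "0 < k" "k < (if b then m else n)"
      "(X, Y) = mv (m2_pow (if b then Sm z else Tm l e) k) u"
    using XY by metis
  show ?thesis
  proof (cases b)
    case True
    then have "(X, Y) \<in> Xcone" using cone_map[OF u(2,3,1)] u(4) unfolding cone_def by simp
    then have "rho * absv Y < absv (X - Y)" unfolding Xcone_def by simp
    moreover have "delta * absv Y \<le> rho * absv Y" using rho_bounds by (simp add: mult_right_mono)
    ultimately show ?thesis by linarith
  next
    case False
    obtain x y where uxy: "u = (x, y)" by (cases u)
    have ux: "(x, y) \<in> Xcone" using u(1) False uxy unfolding cone_def by simp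
    obtain P Q where PQ: "mv (Tm l (e ^ k)) (x, y) = (P, Q)" by (cases "mv (Tm l (e ^ k)) (x, y)")
    have k: "0 < k" "k < n" using u False by auto
    note T = Tm_estimate[OF k ux PQ]
    define c where "c = (l - 1) ^ (k - 1)"
    have XY': "X = c * P" "Y = c * Q" using u(4) False Tm_pow_mv[OF k(1), of x y] PQ uxy c_def by auto
    have "delta * absv Y = absv c * (delta * absv Q)" by (simp add: XY' av_mult)
    also have "\<dots> \<le> absv c * (delta * absv (x - y))"
      using T(2) rho_bounds by (simp add: mult_left_mono)
    also have "\<dots> = absv (X - Y)" using T(1) by (simp add: XY' av_mult right_diff_distrib[symmetric])
    finally show ?thesis .
  qed
qed

lemma word_image_01:
  assumes w: "reduced_word m n w" "w \<noteq> []" "\<not> fst (last w)"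
    and XY: "mv (eval_word (Sm z) (Tm l e) w) (0, 1) = (X, Y)"
  shows "absv X = absv Y"
proof -
  have "(0, 1) \<in> cone (fst (last w))" using w(3) rho_bounds unfolding cone_def Xcone_def by simp
  from first_syllable[OF w(1,2) this] obtain b k u where
    u: "u \<in> cone b" "0 < k" "k < (if b then m else n)"
      "(X, Y) = mv (m2_pow (if b then Sm z else Tm l e) k) u"
    using XY by metis
  show ?thesis
  proof (cases b)
    case False
    then have "(X, Y) \<in> Ycone" using cone_map[OF u(2,3,1)] u(4) unfolding cone_def by simp
    then show ?thesis using Ycone_unit by blast
  next
    case True
    obtain x y where uxy: "u = (x, y)" by (cases u)
    have "(x, y) \<in> Ycone" using u(1) True uxy unfolding cone_def by simp
    moreover have "(X, Y) = (z ^ k * x, y)" using u(4) True uxy by (simp add: Sm_pow mv_Sm)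
    ultimately show ?thesis using Ycone_unit roots_unit by (simp add: av_mult av_power)
  qed
qed

lemma no_reduced_word_near_id:
  assumes w: "reduced_word m n w" "w \<noteq> []"
    and N: "proj_eq (a, b, c, d) (eval_word (Sm z) (Tm l e) w)"
    and close: "absv (a - 1) < delta" "absv b < delta" "absv c < delta" "absv (d - 1) < delta"
  shows False
proof -
  obtain \<kappa> where \<kappa>: "\<kappa> \<noteq> 0" "(a, b, c, d) = m2_smult \<kappa> (eval_word (Sm z) (Tm l e) w)"
    using N unfolding proj_eq_def by blast
  have mvN: "mv (a, b, c, d) (x, y) = (\<kappa> * fst (mv (eval_word (Sm z) (Tm l e) w) (x, y)),
                                       \<kappa> * snd (mv (eval_word (Sm z) (Tm l e) w) (x, y)))" for x y
    unfolding \<kappa>(2) mv_smult ..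
  have d1: "delta < 1" using rho_bounds by linarith
  have ad: "absv d = 1" using close(4) d1 av_unit_close by simp
  show False
  proof (cases "fst (last w)")
    case True
    obtain X Y where XY: "mv (eval_word (Sm z) (Tm l e) w) (1, 1) = (X, Y)" by fastforce
    have sums: "a + b = \<kappa> * X" "c + d = \<kappa> * Y" using mvN[of 1 1] XY by simp_all
    have cd: "absv (c + d) = 1" using av_strict[of c d] close(3) d1 ad by simp
    have "absv ((a - 1) + b) < delta" "absv (c + (d - 1)) < delta" using close by (intro av_add_less; simp)+
    then have "absv (((a - 1) + b) - (c + (d - 1))) < delta" by (rule av_diff_less)
    then have "absv ((a + b) - (c + d)) < delta" by (simp add: algebra_simps)
    moreover have "delta * absv (c + d) \<le> absv ((a + b) - (c + d))"
    proof -
      have "delta * absv (c + d) = absv \<kappa> * (delta * absv Y)" by (simp add: sums av_mult)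
      also have "\<dots> \<le> absv \<kappa> * absv (X - Y)"
        using word_image_11[OF w True XY] by (simp add: mult_left_mono)
      also have "\<dots> = absv ((a + b) - (c + d))" by (simp add: sums av_mult flip: right_diff_distrib)
      finally show ?thesis .
    qed
    ultimately show False using cd by simp
  next
    case False
    obtain X Y where XY: "mv (eval_word (Sm z) (Tm l e) w) (0, 1) = (X, Y)" by fastforce
    have "b = \<kappa> * X" "d = \<kappa> * Y" using mvN[of 0 1] XY by simp_all
    then have "absv b = absv d" using word_image_01[OF w False XY] by (simp add: av_mult)
    then show False using ad close(2) d1 by simp
  qed
qed

lemma pingpong_group:
  "m2_det (Sm z) \<noteq> 0 \<and> m2_det (Tm l e) \<noteq> 0 \<and>
   pgl_has_order (Sm z) m \<and> pgl_has_order (Tm l e) n \<and>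
   fixed_points (Sm z) = {Some 0, None} \<and> fixed_points (Tm l e) = {Some 1, Some l} \<and>
   free_product_via m n (Sm z) (Tm l e) \<and> pgl_discrete absv (gen_group (Sm z) (Tm l e))"
proof -
  have z0: "z \<noteq> 0" using prim_root_nonzero[OF z] m by simp
  have e0: "e \<noteq> 0" using prim_root_nonzero[OF e] n by simp
  have ds: "m2_det (Sm z) \<noteq> 0" unfolding Sm_det using z0 .
  have dt: "m2_det (Tm l e) \<noteq> 0" unfolding Tm_det using l e0 by simp
  have os: "pgl_has_order (Sm z) m" using Sm_order[of m z] z m by simp
  have ot: "pgl_has_order (Tm l e) n" using Tm_order[OF l, of n e] e n by simp
  have free: "free_product_via m n (Sm z) (Tm l e)"
    unfolding free_product_via_def
  proof (intro conjI os ot allI impI notI)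
    fix w assume w: "w \<noteq> [] \<and> reduced_word m n w"
      and id: "proj_eq (eval_word (Sm z) (Tm l e) w) m2_id"
    have "proj_eq (1, 0, 0, 1) (eval_word (Sm z) (Tm l e) w)" using proj_eq_sym[OF id] by (simp add: m2_id_def)
    then show False using no_reduced_word_near_id[of w 1 0 0 1] w rho_bounds by simp
  qed
  have disc: "pgl_discrete absv (gen_group (Sm z) (Tm l e))"
    unfolding pgl_discrete_def
  proof (intro exI[of _ delta] conjI rho_bounds ballI allI impI)
    fix g a b c d
    assume g: "g \<in> gen_group (Sm z) (Tm l e)"
      and h: "proj_eq (a, b, c, d) g \<and> absv (a - 1) < delta \<and> absv b < delta \<and>
              absv c < delta \<and> absv (d - 1) < delta"
    obtain ws where ws: "g = m2_prod ws" "set ws \<subseteq> {Sm z, Tm l e, m2_adj (Sm z), m2_adj (Tm l e)}"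
      using g unfolding gen_group_def by blast
    have "proj_eq (m2_pow (Sm z) m) m2_id" "proj_eq (m2_pow (Tm l e) n) m2_id"
      using os ot unfolding pgl_has_order_def by auto
    then obtain w where w: "reduced_word m n w" "proj_eq g (eval_word (Sm z) (Tm l e) w)"
      using normal_form[OF ds dt m n _ _ ws(2)] ws(1) by blast
    show "proj_eq g m2_id"
    proof (cases "w = []")
      case False
      then show ?thesis using no_reduced_word_near_id[OF w(1) False proj_eq_trans[OF _ w(2)]] h by blast
    qed (use w in simp)
  qed
  have "z \<noteq> 1" "e \<noteq> 1" using prim_root_ne_1 z e m n by auto
  then show ?thesis using ds dt os ot free disc Sm_fixed Tm_fixed[OF l _ e0] by simp
qed

end

section \<open>Powers of integral matrices accumulate at the identity\<close>

fun m2_integral :: "('k \<Rightarrow> real) \<Rightarrow> 'k m2 \<Rightarrow> bool" where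
  "m2_integral av (a, b, c, d) \<longleftrightarrow> av a \<le> 1 \<and> av b \<le> 1 \<and> av c \<le> 1 \<and> av d \<le> 1"

fun m2_near_id :: "('k::field \<Rightarrow> real) \<Rightarrow> 'k m2 \<Rightarrow> real \<Rightarrow> bool" where
  "m2_near_id av (a, b, c, d) e \<longleftrightarrow> av (a - 1) < e \<and> av b < e \<and> av c < e \<and> av (d - 1) < e"

fun m2_close :: "('k::field \<Rightarrow> real) \<Rightarrow> 'k m2 \<Rightarrow> 'k m2 \<Rightarrow> real \<Rightarrow> bool" where
  "m2_close av (a, b, c, d) (a', b', c', d') e \<longleftrightarrow>
     av (a - a') < e \<and> av (b - b') < e \<and> av (c - c') < e \<and> av (d - d') < e"

context padic
begin

definition av_lim :: "(nat \<Rightarrow> 'k) \<Rightarrow> 'k \<Rightarrow> bool" where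
  "av_lim f L \<longleftrightarrow> (\<forall>e>0. \<exists>N. \<forall>i\<ge>N. absv (f i - L) < e)"

lemma av_lim_subseq: "av_lim f L \<Longrightarrow> strict_mono q \<Longrightarrow> av_lim (f \<circ> q) L"
  unfolding av_lim_def comp_def by (meson le_trans seq_suble)

lemma m2_integral_mult: "m2_integral absv M \<Longrightarrow> m2_integral absv N \<Longrightarrow> m2_integral absv (m2_mult M N)"
  by (cases M rule: prod_cases4; cases N rule: prod_cases4)
     (auto simp: av_mult intro!: av_add_le mult_le_one)

lemma m2_integral_pow: "m2_integral absv M \<Longrightarrow> m2_integral absv (m2_pow M k)"
  by (induction k) (auto simp: m2_pow_Suc m2_id_def intro: m2_integral_mult)

lemma av_compact_lim:
  fixes X :: "nat \<Rightarrow> 'k"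
  shows "(\<And>i. absv (X i) \<le> 1) \<Longrightarrow> \<exists>r L. strict_mono r \<and> av_lim (X \<circ> r) L"
  using av_compact[of X] unfolding av_lim_def comp_def by auto

lemma m2_integral_compact:
  fixes X :: "nat \<Rightarrow> 'k m2"
  assumes b: "\<And>j. m2_integral absv (X j)"
  shows "\<exists>(r::nat \<Rightarrow> nat) L. strict_mono r \<and> (\<forall>e>0. \<exists>N. \<forall>i\<ge>N. m2_close absv (X (r i)) L e)"
proof -
  define x1 where "x1 j = fst (X j)" for j
  define x2 where "x2 j = fst (snd (X j))" for j
  define x3 where "x3 j = fst (snd (snd (X j)))" for j
  define x4 where "x4 j = snd (snd (snd (X j)))" for j
  have XX: "X j = (x1 j, x2 j, x3 j, x4 j)" for j unfolding x1_def x2_def x3_def x4_def by simp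
  have b': "absv (x1 j) \<le> 1" "absv (x2 j) \<le> 1" "absv (x3 j) \<le> 1" "absv (x4 j) \<le> 1" for j
    using b[of j] unfolding XX by auto
  obtain r1 L1 where r1: "strict_mono r1" "av_lim (x1 \<circ> r1) L1"
    using av_compact_lim[of x1] b'(1) by blast
  obtain r2 L2 where r2: "strict_mono r2" "av_lim ((x2 \<circ> r1) \<circ> r2) L2"
    using av_compact_lim[of "x2 \<circ> r1"] b'(2) by (simp only: comp_apply) blast
  obtain r3 L3 where r3: "strict_mono r3" "av_lim ((x3 \<circ> r1 \<circ> r2) \<circ> r3) L3"
    using av_compact_lim[of "x3 \<circ> r1 \<circ> r2"] b'(3) by (simp only: comp_apply) blast
  obtain r4 L4 where r4: "strict_mono r4" "av_lim ((x4 \<circ> r1 \<circ> r2 \<circ> r3) \<circ> r4) L4"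
    using av_compact_lim[of "x4 \<circ> r1 \<circ> r2 \<circ> r3"] b'(4) by (simp only: comp_apply) blast
  define r where "r = r1 \<circ> r2 \<circ> r3 \<circ> r4"
  have sm: "strict_mono r" unfolding r_def using r1 r2 r3 r4 by (intro strict_mono_o)
  have "av_lim (x1 \<circ> r1 \<circ> (r2 \<circ> r3 \<circ> r4)) L1"
    using r2 r3 r4 by (intro av_lim_subseq[OF r1(2)] strict_mono_o)
  moreover have "av_lim (x2 \<circ> r1 \<circ> r2 \<circ> (r3 \<circ> r4)) L2"
    using r3 r4 by (intro av_lim_subseq[OF r2(2)] strict_mono_o)
  moreover have "av_lim (x3 \<circ> r1 \<circ> r2 \<circ> r3 \<circ> r4) L3"
    using r4 by (intro av_lim_subseq[OF r3(2)])
  ultimately have lims: "av_lim (x1 \<circ> r) L1" "av_lim (x2 \<circ> r) L2" "av_lim (x3 \<circ> r) L3"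
    "av_lim (x4 \<circ> r) L4"
    using r4(2) unfolding r_def by (simp_all only: comp_assoc)
  have "\<exists>N. \<forall>i\<ge>N. m2_close absv (X (r i)) (L1, L2, L3, L4) e" if e: "0 < e" for e
  proof -
    obtain N1 where N1: "\<forall>i\<ge>N1. absv (x1 (r i) - L1) < e" using lims(1) e unfolding av_lim_def by auto
    obtain N2 where N2: "\<forall>i\<ge>N2. absv (x2 (r i) - L2) < e" using lims(2) e unfolding av_lim_def by auto
    obtain N3 where N3: "\<forall>i\<ge>N3. absv (x3 (r i) - L3) < e" using lims(3) e unfolding av_lim_def by auto
    obtain N4 where N4: "\<forall>i\<ge>N4. absv (x4 (r i) - L4) < e" using lims(4) e unfolding av_lim_def by auto
    show ?thesis by (rule exI[of _ "max (max N1 N2) (max N3 N4)"]) (simp add: XX N1 N2 N3 N4)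
  qed
  then show ?thesis using sm by blast
qed

lemma m2_close_trans:
  assumes "m2_close absv Q L e" "m2_close absv P L e"
  shows "m2_close absv Q P e"
proof -
  have *: "absv (q - p) < e" if "absv (q - l) < e" "absv (p - l) < e" for q p l
    using av_diff_less[OF that] by simp
  show ?thesis using assms
    by (cases Q rule: prod_cases4; cases P rule: prod_cases4; cases L rule: prod_cases4) (auto intro: *)
qed

lemma near_id:
  assumes b: "m2_integral absv P" and d: "absv (m2_det P) = 1" and c: "m2_close absv Q P e"
  shows "m2_near_id absv (m2_smult (inverse (m2_det P)) (m2_mult (m2_adj P) Q)) e"
proof -
  obtain p1 p2 p3 p4 where P: "P = (p1, p2, p3, p4)" by (cases P rule: prod_cases4)
  obtain q1 q2 q3 q4 where Q: "Q = (q1, q2, q3, q4)" by (cases Q rule: prod_cases4)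
  define D where "D = p1 * p4 - p2 * p3"
  have D0: "D \<noteq> 0" using d P D_def by auto
  have aD: "absv (inverse D) = 1" using d P D_def by (simp add: av_inverse)
  have bb: "absv p1 \<le> 1" "absv p2 \<le> 1" "absv p3 \<le> 1" "absv p4 \<le> 1" using b P by auto
  have cc: "absv (q1 - p1) < e" "absv (q2 - p2) < e" "absv (q3 - p3) < e" "absv (q4 - p4) < e"
    using c P Q by auto
  have comb: "absv (x * E - y * F) < e" if "absv x \<le> 1" "absv y \<le> 1" "absv E < e" "absv F < e"
    for x y E F
    using av_diff_less[OF av_small_mult av_small_mult] that by blast
  have e1: "inverse D * (p4 * q1 + - p2 * q3) - 1 = inverse D * (p4 * (q1 - p1) - p2 * (q3 - p3))"
    using D0 unfolding D_def by (simp add: field_simps)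
  have e2: "inverse D * (p4 * q2 + - p2 * q4) = inverse D * (p4 * (q2 - p2) - p2 * (q4 - p4))"
    using D0 unfolding D_def by (simp add: field_simps)
  have e3: "inverse D * (- p3 * q1 + p1 * q3) = inverse D * (p1 * (q3 - p3) - p3 * (q1 - p1))"
    using D0 unfolding D_def by (simp add: field_simps)
  have e4: "inverse D * (- p3 * q2 + p1 * q4) - 1 = inverse D * (p1 * (q4 - p4) - p3 * (q2 - p2))"
    using D0 unfolding D_def by (simp add: field_simps)
  show ?thesis
    unfolding P Q m2_adj.simps m2_mult.simps m2_smult.simps m2_det.simps m2_near_id.simps
    unfolding D_def[symmetric] e1 e2 e3 e4 av_mult aD mult_1
    using comb bb cc by auto
qed

text \<open>An integral matrix of unit determinant has nontrivial powers arbitrarily close to the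
identity: two terms C^k1, C^k2 of a convergent subsequence of powers are close, hence so is
C^(k2-k1) = C^-k1 C^k2 to the identity.\<close>
lemma integral_power_near_id:
  assumes bC: "m2_integral absv C" and dC: "absv (m2_det C) = 1" and eps: "0 < \<epsilon>"
  shows "\<exists>k>0. m2_near_id absv (m2_pow C k) \<epsilon>"
proof -
  obtain rr :: "nat \<Rightarrow> nat" and L where rr: "strict_mono rr" "\<forall>e>0. \<exists>N. \<forall>i\<ge>N. m2_close absv (m2_pow C (rr i)) L e"
    using m2_integral_compact[of "m2_pow C", OF m2_integral_pow[OF bC]] by blast
  obtain N where N: "\<forall>i\<ge>N. m2_close absv (m2_pow C (rr i)) L \<epsilon>" using rr(2) eps by blast
  define k1 where "k1 = rr N"
  define k2 where "k2 = rr (Suc N)"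
  have k12: "k1 < k2" unfolding k1_def k2_def using rr(1) by (simp add: strict_mono_def)
  define P where "P = m2_pow C k1"
  have cQP: "m2_close absv (m2_pow C k2) P \<epsilon>"
    using m2_close_trans[of "m2_pow C k2" L \<epsilon> P] N unfolding P_def k1_def k2_def by simp
  have QP: "m2_pow C k2 = m2_mult P (m2_pow C (k2 - k1))"
    unfolding P_def using k12 by (simp flip: m2_pow_add)
  have dP: "absv (m2_det P) = 1" unfolding P_def m2_det_pow by (simp add: av_power dC)
  then have "m2_det P \<noteq> 0" by auto
  then have "m2_smult (inverse (m2_det P)) (m2_mult (m2_adj P) (m2_pow C k2)) = m2_pow C (k2 - k1)"
    unfolding QP m2_mult_assoc[symmetric] m2_adj_mult m2_smult_mult_left m2_smult_smult by simp
  moreover have "m2_near_id absv (m2_smult (inverse (m2_det P)) (m2_mult (m2_adj P) (m2_pow C k2))) \<epsilon>"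
    using near_id[OF _ dP cQP] m2_integral_pow[OF bC] unfolding P_def by blast
  ultimately show ?thesis using k12 by (metis zero_less_diff)
qed

lemma conj_near_id:
  assumes c: "m2_near_id absv D e" and r: "r \<noteq> 0" "absv r \<le> 1" and e: "0 < e"
  shows "m2_near_id absv (m2_smult (inverse r) (m2_mult (r, 1, 0, 1) (m2_mult D (1, -1, 0, r))))
           (e / absv r)"
proof -
  obtain x1 x2 x3 x4 where D: "D = (x1, x2, x3, x4)" by (cases D rule: prod_cases4)
  have ar: "0 < absv r" using r av_pos by simp
  have cc: "absv (x1 - 1) < e" "absv x2 < e" "absv x3 < e" "absv (x4 - 1) < e" using c D by auto
  have "e \<le> e / absv r" using ar r(2) e by (simp add: le_divide_eq)
  then have a: "absv (x1 - 1) < e / absv r" "absv x2 < e / absv r" "absv (x4 - 1) < e / absv r"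
    using cc by linarith+
  have x3r: "absv (x3 / r) < e / absv r" using cc(3) ar by (simp add: av_divide divide_strict_right_mono)
  have a2': "absv (r * x2) < e / absv r" using av_small_mult[OF r(2) a(2)] .
  have M: "m2_smult (inverse r) (m2_mult (r, 1, 0, 1) (m2_mult (x1, x2, x3, x4) (1, -1, 0, r))) =
     (((x1 - 1) + x3 / r) + 1, (- (x1 - 1) - x3 / r + r * x2) + (x4 - 1), x3 / r, ((x4 - 1) - x3 / r) + 1)"
    using r by (simp add: field_simps)
  have "absv (- (x1 - 1)) < e / absv r" using a(1) by (simp only: av_minus)
  then have "absv (- (x1 - 1) - x3 / r + r * x2 + (x4 - 1)) < e / absv r"
    by (rule av_add_less[OF av_add_less[OF av_diff_less[OF _ x3r] a2'] a(3)])
  then show ?thesis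
    unfolding D M m2_near_id.simps add_diff_cancel_right'
    using av_add_less[OF a(1) x3r] av_diff_less[OF a(3) x3r] x3r by simp
qed

end

section \<open>Necessity\<close>

lemma discrete_free_gap:
  fixes absv :: "'k::field \<Rightarrow> real"
  assumes free: "free_product_via m n s t" and disc: "pgl_discrete absv (gen_group s t)"
  obtains \<epsilon> where "0 < \<epsilon>"
    "\<And>w W. reduced_word m n w \<Longrightarrow> w \<noteq> [] \<Longrightarrow> proj_eq W (eval_word s t w) \<Longrightarrow>
       \<not> m2_near_id absv W \<epsilon>"
proof -
  obtain \<epsilon> where \<epsilon>: "\<epsilon> > 0" and discr: "\<forall>g\<in>gen_group s t. \<forall>a b c d.
        proj_eq (a, b, c, d) g \<and> absv (a - 1) < \<epsilon> \<and> absv b < \<epsilon> \<and>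
        absv c < \<epsilon> \<and> absv (d - 1) < \<epsilon> \<longrightarrow> proj_eq g m2_id"
    using disc unfolding pgl_discrete_def by blast
  have "\<not> m2_near_id absv W \<epsilon>"
    if w: "reduced_word m n w" "w \<noteq> []" and W: "proj_eq W (eval_word s t w)" for w W
  proof
    assume near: "m2_near_id absv W \<epsilon>"
    obtain a b c d where Wt: "W = (a, b, c, d)" by (cases W rule: prod_cases4)
    have "proj_eq (eval_word s t w) m2_id"
      using discr eval_word_in_gen[of s t w] W near unfolding Wt by simp blast
    then show False using free w unfolding free_product_via_def by blast
  qed
  then show ?thesis using \<epsilon> that by blast
qed

lemma conj_word_power:
  fixes s t C X :: "'k::field m2"
  assumes r: "r \<noteq> 0" and k: "0 < k"
    and st: "proj_eq (m2_mult (m2_pow s a) (m2_pow t b)) X"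
    and hC: "proj_eq (m2_mult (r, 1, 0, 1) (m2_mult C (m2_adj (r, 1, 0, 1)))) X"
  shows "proj_eq (m2_smult (inverse r) (m2_mult (r, 1, 0, 1) (m2_mult (m2_pow C k) (1, -1, 0, r))))
           (eval_word s t (alt_word a b k))"
proof -
  have hh: "m2_mult (m2_adj (r, 1, 0, 1)) (r, 1, 0, 1) = m2_smult r m2_id" by (simp add: m2_id_def)
  have "proj_eq (m2_smult (inverse r) (m2_mult (r, 1, 0, 1) (m2_mult (m2_pow C k) (1, -1, 0, r))))
          (m2_pow (m2_mult (r, 1, 0, 1) (m2_mult C (m2_adj (r, 1, 0, 1)))) k)"
    unfolding conj_pow[OF hh k] using r by (simp add: proj_eq_smult_left_iff proj_eq_sym proj_eq_smult)
  also have "proj_eq \<dots> (m2_pow X k)" using proj_eq_pow hC by blast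
  also have "proj_eq \<dots> (eval_word s t (alt_word a b k))"
    unfolding alt_word_eval using proj_eq_sym[OF st] by (rule proj_eq_pow)
  finally show ?thesis .
qed

text \<open>The identity behind the necessity proof: with r = 1 - z' and c0 (lam - 1) = r (e' - 1),
conjugating (z', -1; 0, 1) (e', 0; c0, 1) by h = (r, 1; 0, 1) gives Sm z' * Tm lam e' up to
a scalar.\<close>
lemma conj_shape:
  fixes z' e' lam r c0 :: "'k::field"
  assumes "c0 * (lam - 1) = r * (e' - 1)" "r = 1 - z'"
  shows "m2_smult (lam - 1) (m2_mult (r, 1, 0, 1)
           (m2_mult (m2_mult (z', -1, 0, 1) (e', 0, c0, 1)) (1, -1, 0, r)))
         = m2_smult r (m2_mult (Sm z') (Tm lam e'))"
  unfolding Tm_def Sm_def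
  by (simp only: m2_smult.simps m2_mult.simps prod.inject) (use assms in algebra)

context padic
begin

lemma integral_conjugate:
  assumes az: "absv z' = 1" and ae: "absv e' = 1" and z1: "z' \<noteq> 1" and l1: "lam \<noteq> 1"
    and bound: "absv (1 - z') * absv (1 - e') \<le> absv (lam - 1)"
  obtains C where "m2_integral absv C" "absv (m2_det C) = 1"
    "proj_eq (m2_mult (1 - z', 1, 0, 1) (m2_mult C (m2_adj (1 - z', 1, 0, 1))))
             (m2_mult (Sm z') (Tm lam e'))"
proof
  define r where "r = 1 - z'"
  define c0 where "c0 = r * (e' - 1) / (lam - 1)"
  define C where "C = m2_mult (z', -1, 0, 1) (e', 0, c0, 1)"
  have r0: "r \<noteq> 0" using z1 unfolding r_def by simp
  have "absv c0 = absv r * absv (1 - e') / absv (lam - 1)"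
    unfolding c0_def by (simp add: av_divide av_mult av_diff_sym)
  also have "\<dots> \<le> 1" using bound l1 av_pos[of "lam - 1"] unfolding r_def by simp
  finally have "absv c0 \<le> 1" .
  then show "m2_integral absv C"
    unfolding C_def using az ae by (intro m2_integral_mult) auto
  show "absv (m2_det C) = 1" unfolding C_def by (simp add: av_mult az ae)
  have "c0 * (lam - 1) = r * (e' - 1)" unfolding c0_def using l1 by simp
  from conj_shape[OF this r_def] show
    "proj_eq (m2_mult (1 - z', 1, 0, 1) (m2_mult C (m2_adj (1 - z', 1, 0, 1))))
             (m2_mult (Sm z') (Tm lam e'))"
    using l1 r0 unfolding C_def r_def by (intro proj_eq_of_smult_eq[of "lam - 1" "1 - z'"]) auto
qed

text \<open>Otherwise, for the powers s^a, t^b attaining af m and af n, the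
elements (s^a t^b)^k come arbitrarily close to the identity.\<close>
lemma necessity:
  fixes s t :: "'k m2" and lam :: 'k
  assumes rootm: "\<exists>z::'k. primitive_root_of_unity m z" and rootn: "\<exists>z::'k. primitive_root_of_unity n z"
    and m: "2 \<le> m" and n: "2 \<le> n"
    and os: "pgl_has_order s m" and ot: "pgl_has_order t n"
    and free: "free_product_via m n s t" and disc: "pgl_discrete absv (gen_group s t)"
    and fs: "fixed_points s = {Some 0, None}" and ft: "fixed_points t = {Some 1, Some lam}"
  shows "absv (lam - 1) < af m * af n"
proof (rule ccontr)
  assume "\<not> absv (lam - 1) < af m * af n"
  then have ge: "af m * af n \<le> absv (lam - 1)" by simp
  have afm: "0 < af m" and afn: "0 < af n" using af_props(1) rootm rootn m n by auto
  then have "0 < af m * af n" by simp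
  then have l1: "lam \<noteq> 1" using ge by auto
  obtain \<zeta> \<eta> where z: "primitive_root_of_unity m \<zeta>" and pS: "proj_eq s (Sm \<zeta>)"
    and e: "primitive_root_of_unity n \<eta>" and pT: "proj_eq t (Tm lam \<eta>)"
    using generator_normal_forms[OF os ot _ _ fs ft l1] m n by auto
  define a where "a = af_exponent m"
  define b where "b = af_exponent n"
  note ka = af_exponent_props[OF z m, folded a_def]
  note kb = af_exponent_props[OF e n, folded b_def]
  define z' where "z' = \<zeta> ^ a"
  define e' where "e' = \<eta> ^ b"
  define r where "r = 1 - z'"
  have az': "absv z' = 1" and ae': "absv e' = 1"
    using av_root_unity z e m n unfolding z'_def e'_def primitive_root_of_unity_def
    by (auto simp: av_power)
  have z1: "z' \<noteq> 1" using ka(3) unfolding z'_def .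
  then have r0: "r \<noteq> 0" unfolding r_def by simp
  have "absv (1 - z') * absv (1 - e') \<le> af m * af n"
    using ka(4) kb(4) afm unfolding z'_def e'_def by (intro mult_mono) auto
  then have bound: "absv (1 - z') * absv (1 - e') \<le> absv (lam - 1)" using ge by linarith
  obtain C where C: "m2_integral absv C" "absv (m2_det C) = 1"
    "proj_eq (m2_mult (r, 1, 0, 1) (m2_mult C (m2_adj (r, 1, 0, 1)))) (m2_mult (Sm z') (Tm lam e'))"
    using integral_conjugate[OF az' ae' z1 l1 bound] unfolding r_def by blast
  have st: "proj_eq (m2_mult (m2_pow s a) (m2_pow t b)) (m2_mult (Sm z') (Tm lam e'))"
    using proj_eq_trans[OF proj_eq_pow[OF pT] Tm_pow_proj_eq[OF l1 kb(1)]] proj_eq_pow[OF pS]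
    unfolding z'_def e'_def Sm_pow by (blast intro: proj_eq_mult)
  obtain \<epsilon> where \<epsilon>: "0 < \<epsilon>" and gap: "\<And>w W. reduced_word m n w \<Longrightarrow> w \<noteq> [] \<Longrightarrow>
      proj_eq W (eval_word s t w) \<Longrightarrow> \<not> m2_near_id absv W \<epsilon>"
    using discrete_free_gap[OF free disc] by blast
  have "0 < \<epsilon> * absv r" using \<epsilon> av_pos[OF r0] by simp
  then obtain k where k: "0 < k" "m2_near_id absv (m2_pow C k) (\<epsilon> * absv r)"
    using integral_power_near_id[OF C(1,2)] by blast
  have "absv r \<le> 1" using av_one_minus_le[OF az'] unfolding r_def .
  then have "m2_near_id absv
      (m2_smult (inverse r) (m2_mult (r, 1, 0, 1) (m2_mult (m2_pow C k) (1, -1, 0, r)))) \<epsilon>"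
    using conj_near_id[OF k(2) r0] \<epsilon> r0 av_pos by simp
  moreover note conj_word_power[OF r0 k(1) st C(3)]
  moreover have "reduced_word m n (alt_word a b k)" by (rule alt_word_reduced[OF ka(1,2) kb(1,2)])
  ultimately show False using gap alt_word_ne[OF k(1)] by blast
qed

end

theorem mainTheorem4:
  fixes absv :: "'k::field_char_0 \<Rightarrow> real" and p m n :: nat
  assumes K: "padic_local_field p absv"
    and m: "m \<ge> 2" and n: "n \<ge> 2"
    and rootm: "\<exists>z::'k. primitive_root_of_unity m z"
    and rootn: "\<exists>z::'k. primitive_root_of_unity n z"
  shows
   "(\<forall>(s::'k m2) t lam.
       m2_det s \<noteq> 0 \<and> m2_det t \<noteq> 0 \<and>
       pgl_has_order s m \<and> pgl_has_order t n \<and>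
       free_product_via m n s t \<and>
       pgl_discrete absv (gen_group s t) \<and>
       fixed_points s = {Some 0, None} \<and>
       fixed_points t = {Some 1, Some lam} \<and>
       absv lam = 1
       \<longrightarrow> absv (lam - 1) < alpha absv p m n)
    \<and>
    (\<forall>lam::'k. absv lam = 1 \<and> lam \<noteq> 1 \<and> absv (lam - 1) < alpha absv p m n \<longrightarrow>
       (\<exists>s t. m2_det s \<noteq> 0 \<and> m2_det t \<noteq> 0 \<and>
          pgl_has_order s m \<and> pgl_has_order t n \<and>
          fixed_points s = {Some 0, None} \<and>
          fixed_points t = {Some 1, Some lam} \<and>
          free_product_via m n s t \<and>
          pgl_discrete absv (gen_group s t)))"
proof -
  interpret padic p absv using K by (rule padic.intro)
  obtain z :: 'k where z: "primitive_root_of_unity m z" using rootm by blast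
  obtain e :: 'k where e: "primitive_root_of_unity n e" using rootn by blast
  show ?thesis
    unfolding alpha_eq
  proof (intro conjI allI impI)
    fix s t :: "'k m2" and lam :: 'k
    assume "m2_det s \<noteq> 0 \<and> m2_det t \<noteq> 0 \<and> pgl_has_order s m \<and> pgl_has_order t n \<and>
      free_product_via m n s t \<and> pgl_discrete absv (gen_group s t) \<and>
      fixed_points s = {Some 0, None} \<and> fixed_points t = {Some 1, Some lam} \<and> absv lam = 1"
    then show "absv (lam - 1) < af m * af n" using necessity[OF rootm rootn m n] by blast
  next
    fix lam :: 'k
    assume "absv lam = 1 \<and> lam \<noteq> 1 \<and> absv (lam - 1) < af m * af n"
    then interpret pingpong p absv m n z e lam
      using z e m n by unfold_locales auto
    show "\<exists>s t. m2_det s \<noteq> 0 \<and> m2_det t \<noteq> 0 \<and> pgl_has_order s m \<and> pgl_has_order t n \<and>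
      fixed_points s = {Some 0, None} \<and> fixed_points t = {Some 1, Some lam} \<and>
      free_product_via m n s t \<and> pgl_discrete absv (gen_group s t)"
      using pingpong_group by blast
  qed
qed

end
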